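(* Let $C^*>0$ and $C_1,C_2>0$. Let $\boldsymbol m_e\in[C(\bar\Omega)]^3$ satisfy $\|\boldsymbol m_e\|_{W^{1,\infty}}\le C^*$ and $|\boldsymbol m_e|=1$ pointwise, and let $\underline{\boldsymbol m}_h=\mathcal P_h\boldsymbol m_e$. For a grid function $\tilde{\boldsymbol m}_h\in\boldsymbol X$ set $\boldsymbol m_h=\tilde{\boldsymbol m}_h/|\tilde{\boldsymbol m}_h|$ pointwise, $\boldsymbol e_h=\underline{\boldsymbol m}_h-\boldsymbol m_h$, $\tilde{\boldsymbol e}_h=\underline{\boldsymbol m}_h-\tilde{\boldsymbol m}_h$. Suppose $$\|\tilde{\boldsymbol e}_h\|_2\le2k^{15/8},\qquad\|\nabla_h\tilde{\boldsymbol e}_h\|_2\le\tfrac12k^{11/8},$$ where $k>0$ and $C_1h\le k\le C_2h$. Then, for $k$ and $h$ sufficiently small, $\tilde{\boldsymbol m}_h$ does not vanish, and $$\|\tilde{\boldsymbol e}_h\|_2^2\ge(1-k^{5/4})\|\boldsymbol e_h\|_2^2+(1-k^{1/4})\|\tilde{\boldsymbol e}_h-\boldsymbol e_h\|_2^2,$$ and for every $\delta>0$ there is a constant $\mathcal C_\delta$ (independent of $h,k$) such that $$\|\nabla_h\boldsymbol e_h\|_2^2\le(1+\delta)\|\nabla_h\tilde{\boldsymbol e}_h\|_2^2+\mathcal C_\delta\|\tilde{\boldsymbol e}_h\|_2^2.$$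
   Context: $\Omega=[0,1]^3$, $h=1/N$, cell-centered grid points $((i-\tfrac12)h,(j-\tfrac12)h,(\ell-\tfrac12)h)$, $0\le i,j,\ell\le N+1$, interior points $\Omega_h^0$ those with $1\le i,j,\ell\le N$. $\boldsymbol X$ is the space of $\mathbb R^3$-valued grid functions satisfying the discrete Neumann condition $\boldsymbol m_{0,j,\ell}=\boldsymbol m_{1,j,\ell}$, $\boldsymbol m_{N+1,j,\ell}=\boldsymbol m_{N,j,\ell}$ (and analogously in $j,\ell$). $\mathcal P_h$ is pointwise interpolation at interior points, extended to ghost points by the Neumann condition. Forward differences $D_xf_{i,j,\ell}=(f_{i+1,j,\ell}-f_{i,j,\ell})/h$ (similarly $D_y,D_z$); $\nabla_h$ collects all forward differences. $\|\boldsymbol f\|_2^2=h^3\sum_{\Omega_h^0}|\boldsymbol f|^2$ and $\|\nabla_h\boldsymbol f\|_2$ is the analogous discrete norm of the difference quotients. *)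

theory Defs
  imports "HOL-Analysis.Analysis"
begin

text \<open>Cell-centred grid on the unit cube with N cells per direction, h = 1/N.
  A grid function is a map from index triples (i,j,l) to R^3; only indices
  0..N+1 (interior 1..N plus ghost points) are meaningful.\<close>

type_synonym gridfun = "nat \<Rightarrow> nat \<Rightarrow> nat \<Rightarrow> real^3"

definition gh :: "nat \<Rightarrow> real" where
  "gh N = 1 / real N"

definition unit_cube :: "(real^3) set" where
  "unit_cube = cbox (vec 0) (vec 1)"

definition gpt :: "nat \<Rightarrow> nat \<Rightarrow> nat \<Rightarrow> nat \<Rightarrow> real^3" where
  "gpt N i j l = vector [(real i - 1/2) * gh N, (real j - 1/2) * gh N, (real l - 1/2) * gh N]"

text \<open>The space X: discrete homogeneous Neumann condition at the ghost points.\<close>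
definition in_X :: "nat \<Rightarrow> gridfun \<Rightarrow> bool" where
  "in_X N m \<longleftrightarrow>
     (\<forall>j\<le>N+1. \<forall>l\<le>N+1. m 0 j l = m 1 j l \<and> m (N+1) j l = m N j l) \<and>
     (\<forall>i\<le>N+1. \<forall>l\<le>N+1. m i 0 l = m i 1 l \<and> m i (N+1) l = m i N l) \<and>
     (\<forall>i\<le>N+1. \<forall>j\<le>N+1. m i j 0 = m i j 1 \<and> m i j (N+1) = m i j N)"

definition clampi :: "nat \<Rightarrow> nat \<Rightarrow> nat" where
  "clampi N i = max 1 (min N i)"

text \<open>P_h: pointwise interpolation at interior points, extended to ghost points
  by the Neumann condition.\<close>
definition Ph :: "nat \<Rightarrow> (real^3 \<Rightarrow> real^3) \<Rightarrow> gridfun" where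
  "Ph N f i j l = f (gpt N (clampi N i) (clampi N j) (clampi N l))"

definition Dx :: "nat \<Rightarrow> gridfun \<Rightarrow> gridfun" where
  "Dx N f i j l = (f (i+1) j l - f i j l) /\<^sub>R gh N"
definition Dy :: "nat \<Rightarrow> gridfun \<Rightarrow> gridfun" where
  "Dy N f i j l = (f i (j+1) l - f i j l) /\<^sub>R gh N"
definition Dz :: "nat \<Rightarrow> gridfun \<Rightarrow> gridfun" where
  "Dz N f i j l = (f i j (l+1) - f i j l) /\<^sub>R gh N"

definition l2norm :: "nat \<Rightarrow> gridfun \<Rightarrow> real" where
  "l2norm N f = sqrt (gh N ^ 3 * (\<Sum>i\<in>{1..N}. \<Sum>j\<in>{1..N}. \<Sum>l\<in>{1..N}. (norm (f i j l))\<^sup>2))"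

definition gradnorm :: "nat \<Rightarrow> gridfun \<Rightarrow> real" where
  "gradnorm N f = sqrt (gh N ^ 3 * (\<Sum>i\<in>{1..N}. \<Sum>j\<in>{1..N}. \<Sum>l\<in>{1..N}.
       (norm (Dx N f i j l))\<^sup>2 + (norm (Dy N f i j l))\<^sup>2 + (norm (Dz N f i j l))\<^sup>2))"

definition gnormalize :: "gridfun \<Rightarrow> gridfun" where
  "gnormalize m i j l = m i j l /\<^sub>R norm (m i j l)"

end

theory Submission
  imports Defs
begin

text \<open>Write \<open>et = P\<^sub>h m\<^sub>e - m\<^sub>t\<close> and \<open>\<sigma> = k^(1/8)\<close>. Since \<open>k \<approx> h\<close>, the hypotheses say that the
  unscaled grid sums of \<open>|et|\<^sup>2\<close> and of the squared forward differences of \<open>et\<close> are \<open>O(\<sigma>^6)\<close>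
  and \<open>O(\<sigma>^14)\<close>. A discrete Sobolev argument (a plane sum is at most the mean over all planes plus
  the variation between neighbouring planes, and likewise for lines and points) turns this into the
  pointwise bound \<open>|et|\<^sup>2 = O(\<sigma>^13)\<close>. As \<open>P\<^sub>h m\<^sub>e\<close> takes unit values, \<open>m\<^sub>t\<close> stays close to the
  unit sphere and never vanishes. Pointwise, \<open>|et|\<^sup>2\<close> splits into a tangential part weighted by
  \<open>|m\<^sub>t| \<approx> 1\<close> and the normal part \<open>(1 - |m\<^sub>t|)\<^sup>2 = |et - e|\<^sup>2\<close>, which gives the \<open>L\<^sup>2\<close> inequality.
  For the gradient, linearising \<open>b \<mapsto> b/|b|\<close> at the unit sphere shows that a difference of \<open>e\<close>
  between neighbouring points is the tangential part of the corresponding difference of \<open>et\<close>, up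
  to second-order radial terms and terms of size \<open>h |et|\<close> coming from the Lipschitz continuity of
  \<open>m\<^sub>e\<close>; above a \<open>\<delta>\<close>-dependent mesh size the crude bound \<open>|e| \<le> 2 |et|\<close> suffices.\<close>

section \<open>Grid sums\<close>

definition grid_sum :: "nat \<Rightarrow> (nat \<Rightarrow> nat \<Rightarrow> nat \<Rightarrow> real) \<Rightarrow> real" where
  "grid_sum N F = (\<Sum>i\<in>{1..N}. \<Sum>j\<in>{1..N}. \<Sum>l\<in>{1..N}. F i j l)"

lemma grid_sum_nonneg: "(\<And>i j l. 0 \<le> F i j l) \<Longrightarrow> 0 \<le> grid_sum N F"
  unfolding grid_sum_def by (intro sum_nonneg)

lemma grid_sum_mono:
  "(\<And>i j l. i \<in> {1..N} \<Longrightarrow> j \<in> {1..N} \<Longrightarrow> l \<in> {1..N} \<Longrightarrow> F i j l \<le> G i j l)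
    \<Longrightarrow> grid_sum N F \<le> grid_sum N G"
  unfolding grid_sum_def by (intro sum_mono) auto

lemma grid_sum_add: "grid_sum N (\<lambda>i j l. F i j l + G i j l) = grid_sum N F + grid_sum N G"
  unfolding grid_sum_def by (simp add: sum.distrib)

lemma grid_sum_cmult: "grid_sum N (\<lambda>i j l. c * F i j l) = c * grid_sum N F"
  unfolding grid_sum_def by (simp add: sum_distrib_left)

lemma grid_sum_divide: "grid_sum N (\<lambda>i j l. F i j l / c) = grid_sum N F / c"
  unfolding grid_sum_def by (simp add: sum_divide_distrib)

lemma grid_sum_swap12: "grid_sum N (\<lambda>i j l. F j i l) = grid_sum N F"
  unfolding grid_sum_def by (rule sum.swap)

lemma grid_sum_swap13: "grid_sum N (\<lambda>i j l. F l j i) = grid_sum N F"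
proof -
  have "(\<Sum>i\<in>{1..N}. \<Sum>j\<in>{1..N}. \<Sum>l\<in>{1..N}. F l j i) = (\<Sum>i\<in>{1..N}. \<Sum>l\<in>{1..N}. \<Sum>j\<in>{1..N}. F l j i)"
    by (intro sum.cong refl sum.swap)
  also have "\<dots> = (\<Sum>l\<in>{1..N}. \<Sum>i\<in>{1..N}. \<Sum>j\<in>{1..N}. F l j i)"
    by (rule sum.swap)
  also have "\<dots> = (\<Sum>l\<in>{1..N}. \<Sum>j\<in>{1..N}. \<Sum>i\<in>{1..N}. F l j i)"
    by (intro sum.cong refl sum.swap)
  finally show ?thesis unfolding grid_sum_def .
qed

lemma grid_sum_outer_last:
  "(\<Sum>l\<in>{1..N}. \<Sum>i\<in>{1..N}. \<Sum>j\<in>{1..N}. F i j l) = grid_sum N F"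
  unfolding grid_sum_def by (rule trans[OF sum.swap], rule sum.cong[OF refl], rule sum.swap)

lemma plane_sum_le_grid_sum:
  assumes "l \<in> {1..N}" "\<And>i j l. 0 \<le> F i j l"
  shows "(\<Sum>i\<in>{1..N}. \<Sum>j\<in>{1..N}. F i j l) \<le> grid_sum N F"
  unfolding grid_sum_def using assms by (intro sum_mono member_le_sum) auto

lemma line_sum_le_grid_sum:
  assumes "j \<in> {1..N}" "l \<in> {1..N}" "\<And>i j l. 0 \<le> F i j l"
  shows "(\<Sum>i\<in>{1..N}. F i j l) \<le> grid_sum N F"
proof -
  have "(\<Sum>i\<in>{1..N}. F i j l) \<le> (\<Sum>i\<in>{1..N}. \<Sum>j\<in>{1..N}. F i j l)"
    using assms by (intro sum_mono member_le_sum[where f = "\<lambda>j. F _ j l"]) auto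
  also have "\<dots> \<le> grid_sum N F"
    using assms by (intro plane_sum_le_grid_sum)
  finally show ?thesis .
qed

lemma l2norm_sq: "(l2norm N f)\<^sup>2 = gh N ^ 3 * grid_sum N (\<lambda>i j l. (norm (f i j l))\<^sup>2)"
  unfolding l2norm_def grid_sum_def gh_def by (simp add: sum_nonneg)

lemma gradnorm_sq:
  "(gradnorm N f)\<^sup>2 = gh N ^ 3 * grid_sum N (\<lambda>i j l.
     (norm (Dx N f i j l))\<^sup>2 + (norm (Dy N f i j l))\<^sup>2 + (norm (Dz N f i j l))\<^sup>2)"
  unfolding gradnorm_def grid_sum_def gh_def by (simp add: sum_nonneg)

lemma sum_Suc_shift_le_double:
  fixes g :: "nat \<Rightarrow> real"
  assumes "N \<ge> 1" "\<And>i. i \<in> {1..N} \<Longrightarrow> 0 \<le> g i" "g (Suc N) = g N"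
  shows "(\<Sum>i\<in>{1..N}. g (Suc i)) \<le> 2 * (\<Sum>i\<in>{1..N}. g i)"
proof -
  have "(\<Sum>i\<in>{1..N}. g (Suc i)) = (\<Sum>i\<in>{2..N}. g i) + g N"
    using assms(1,3) by (simp add: sum.shift_bounds_cl_Suc_ivl[symmetric] sum.cl_ivl_Suc numeral_2_eq_2)
  also have "(\<Sum>i\<in>{2..N}. g i) \<le> (\<Sum>i\<in>{1..N}. g i)"
    by (rule sum_mono2) (use assms in auto)
  also have "g N \<le> (\<Sum>i\<in>{1..N}. g i)"
    by (rule member_le_sum) (use assms in auto)
  finally show ?thesis by simp
qed

lemma grid_sum_shift_x_le:
  assumes "N \<ge> 1" "\<And>i j l. 0 \<le> r i j l"
    and "\<And>j l. j \<in> {1..N} \<Longrightarrow> l \<in> {1..N} \<Longrightarrow> r (Suc N) j l = r N j l"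
  shows "grid_sum N (\<lambda>i j l. r (Suc i) j l) \<le> 2 * grid_sum N r"
proof -
  define g where "g i = (\<Sum>j\<in>{1..N}. \<Sum>l\<in>{1..N}. r i j l)" for i
  have "(\<Sum>i\<in>{1..N}. g (Suc i)) \<le> 2 * (\<Sum>i\<in>{1..N}. g i)"
    by (rule sum_Suc_shift_le_double) (use assms in \<open>auto simp: g_def intro!: sum_nonneg sum.cong\<close>)
  then show ?thesis unfolding grid_sum_def g_def .
qed

lemma grid_sum_shift_le:
  assumes "N \<ge> 1" "\<And>i j l. 0 \<le> r i j l"
    and "\<And>j l. j \<in> {1..N} \<Longrightarrow> l \<in> {1..N} \<Longrightarrow> r (Suc N) j l = r N j l"
    and "\<And>i l. i \<in> {1..N} \<Longrightarrow> l \<in> {1..N} \<Longrightarrow> r i (Suc N) l = r i N l"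
    and "\<And>i j. i \<in> {1..N} \<Longrightarrow> j \<in> {1..N} \<Longrightarrow> r i j (Suc N) = r i j N"
  shows "grid_sum N (\<lambda>i j l. r (Suc i) j l) \<le> 2 * grid_sum N r"
    and "grid_sum N (\<lambda>i j l. r i (Suc j) l) \<le> 2 * grid_sum N r"
    and "grid_sum N (\<lambda>i j l. r i j (Suc l)) \<le> 2 * grid_sum N r"
proof -
  show "grid_sum N (\<lambda>i j l. r (Suc i) j l) \<le> 2 * grid_sum N r"
    using assms(1-3) by (rule grid_sum_shift_x_le)
  have "grid_sum N (\<lambda>i j l. r j (Suc i) l) \<le> 2 * grid_sum N (\<lambda>i j l. r j i l)"
    using assms(1,2,4) by (intro grid_sum_shift_x_le) auto
  then show "grid_sum N (\<lambda>i j l. r i (Suc j) l) \<le> 2 * grid_sum N r"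
    by (simp only: grid_sum_swap12[of N "\<lambda>i j l. r i (Suc j) l"] grid_sum_swap12[of N r])
  have "grid_sum N (\<lambda>i j l. r l j (Suc i)) \<le> 2 * grid_sum N (\<lambda>i j l. r l j i)"
    using assms(1,2,5) by (intro grid_sum_shift_x_le) auto
  then show "grid_sum N (\<lambda>i j l. r i j (Suc l)) \<le> 2 * grid_sum N r"
    by (simp only: grid_sum_swap13[of N "\<lambda>i j l. r i j (Suc l)"] grid_sum_swap13[of N r])
qed

section \<open>Grid interpolation\<close>

lemma gpt_mem_unit_cube:
  assumes "i \<in> {1..N}" "j \<in> {1..N}" "l \<in> {1..N}"
  shows "gpt N i j l \<in> unit_cube"
proof -
  have coord: "0 \<le> (real i - 1/2) * gh N \<and> (real i - 1/2) * gh N \<le> 1" if "i \<in> {1..N}" for i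
    using that by (auto simp: gh_def field_simps)
  show ?thesis unfolding unit_cube_def mem_box_cart gpt_def
    using coord[OF assms(1)] coord[OF assms(2)] coord[OF assms(3)] by (auto simp: forall_3)
qed

lemma clampi_mem: "1 \<le> N \<Longrightarrow> clampi N i \<in> {1..N}"
  by (auto simp: clampi_def)

lemma Ph_norm_eq_1:
  assumes "1 \<le> N" "\<forall>x\<in>unit_cube. norm (me x) = 1"
  shows "norm (Ph N me i j l) = 1"
  unfolding Ph_def using assms gpt_mem_unit_cube clampi_mem by blast

lemma dist_gpt_le:
  "dist (gpt N i' j' l') (gpt N i j l)
    \<le> gh N * (\<bar>real i' - real i\<bar> + \<bar>real j' - real j\<bar> + \<bar>real l' - real l\<bar>)"
proof -
  have diff: "gpt N i' j' l' - gpt N i j l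
      = vector [(real i' - real i) * gh N, (real j' - real j) * gh N, (real l' - real l) * gh N]"
    unfolding gpt_def by (simp add: vec_eq_iff forall_3 algebra_simps)
  have "dist (gpt N i' j' l') (gpt N i j l) \<le> (\<Sum>c\<in>UNIV. \<bar>(gpt N i' j' l' - gpt N i j l) $ c\<bar>)"
    unfolding dist_norm by (rule norm_le_l1_cart)
  also have "\<dots> = gh N * (\<bar>real i' - real i\<bar> + \<bar>real j' - real j\<bar> + \<bar>real l' - real l\<bar>)"
  proof -
    have "0 \<le> gh N" by (simp add: gh_def)
    then show ?thesis unfolding diff sum_3 by (simp add: abs_mult distrib_left mult.commute)
  qed
  finally show ?thesis .
qed

lemma clampi_Suc_dist: "\<bar>real (clampi N (Suc i)) - real (clampi N i)\<bar> \<le> 1"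
  by (auto simp: clampi_def max_def min_def)

lemma Ph_neighbour_dist_le:
  assumes N: "1 \<le> N" and lip: "L-lipschitz_on unit_cube f"
    and step: "\<bar>real (clampi N i') - real (clampi N i)\<bar> + \<bar>real (clampi N j') - real (clampi N j)\<bar>
      + \<bar>real (clampi N l') - real (clampi N l)\<bar> \<le> 1"
  shows "norm (Ph N f i' j' l' - Ph N f i j l) \<le> L * gh N"
proof -
  have "norm (Ph N f i' j' l' - Ph N f i j l)
      \<le> L * dist (gpt N (clampi N i') (clampi N j') (clampi N l')) (gpt N (clampi N i) (clampi N j) (clampi N l))"
    unfolding Ph_def dist_norm[symmetric]
    by (rule lipschitz_onD[OF lip]) (auto intro!: gpt_mem_unit_cube clampi_mem N)
  also have "\<dots> \<le> L * gh N"
  proof (rule mult_left_mono)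
    show "dist (gpt N (clampi N i') (clampi N j') (clampi N l')) (gpt N (clampi N i) (clampi N j) (clampi N l))
        \<le> gh N"
      using order_trans[OF dist_gpt_le mult_left_mono[OF step]] by (simp add: gh_def)
  qed (rule lipschitz_on_nonneg[OF lip])
  finally show ?thesis .
qed

lemma Ph_Suc_dist_le:
  assumes "1 \<le> N" "L-lipschitz_on unit_cube f"
  shows "norm (Ph N f (Suc i) j l - Ph N f i j l) \<le> L * gh N"
    and "norm (Ph N f i (Suc j) l - Ph N f i j l) \<le> L * gh N"
    and "norm (Ph N f i j (Suc l) - Ph N f i j l) \<le> L * gh N"
  using clampi_Suc_dist[of N i] clampi_Suc_dist[of N j] clampi_Suc_dist[of N l]
  by (auto intro!: Ph_neighbour_dist_le[OF assms])

lemma Ph_clampi: "1 \<le> N \<Longrightarrow> Ph N f i j l = Ph N f (clampi N i) (clampi N j) (clampi N l)"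
  unfolding Ph_def clampi_def by (simp add: max_def min_def)

lemma in_X_clampi:
  assumes X: "in_X N m" and N: "1 \<le> N" and ijl: "i \<le> N+1" "j \<le> N+1" "l \<le> N+1"
  shows "m i j l = m (clampi N i) (clampi N j) (clampi N l)"
proof -
  have clamp_cases: "clampi N x = x \<or> (x = 0 \<and> clampi N x = 1) \<or> (x = N+1 \<and> clampi N x = N)"
    if "x \<le> N+1" for x
    using that N unfolding clampi_def by (auto simp: max_def min_def)
  have le: "clampi N x \<le> N+1" for x using clampi_mem[OF N, of x] by auto
  have "m i j l = m (clampi N i) j l"
    using clamp_cases[OF ijl(1)] X ijl unfolding in_X_def by auto
  also have "\<dots> = m (clampi N i) (clampi N j) l"
    using clamp_cases[OF ijl(2)] X ijl le[of i] unfolding in_X_def by auto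
  also have "\<dots> = m (clampi N i) (clampi N j) (clampi N l)"
    using clamp_cases[OF ijl(3)] X le[of i] le[of j] unfolding in_X_def by auto
  finally show ?thesis .
qed

section \<open>A discrete Sobolev inequality\<close>

lemma abs_le_sum_Suc_diff:
  fixes g :: "nat \<Rightarrow> real"
  assumes "p \<le> q"
  shows "\<bar>g q - g p\<bar> \<le> (\<Sum>i\<in>{p..<q}. \<bar>g (Suc i) - g i\<bar>)"
  using sum_abs[of "\<lambda>i. g (Suc i) - g i" "{p..<q}"] by (simp add: sum_Suc_diff' assms)

lemma le_mean_plus_variation:
  fixes g :: "nat \<Rightarrow> real"
  assumes "p \<in> {1..N}"
  shows "g p \<le> (\<Sum>q\<in>{1..N}. g q) / real N + (\<Sum>i\<in>{1..N}. \<bar>g (Suc i) - g i\<bar>)"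
proof -
  let ?V = "\<Sum>i\<in>{1..N}. \<bar>g (Suc i) - g i\<bar>"
  have "g p \<le> g q + ?V" if q: "q \<in> {1..N}" for q
  proof -
    have "\<bar>g (max p q) - g (min p q)\<bar> \<le> (\<Sum>i\<in>{min p q..<max p q}. \<bar>g (Suc i) - g i\<bar>)"
      by (rule abs_le_sum_Suc_diff) simp
    also have "\<dots> \<le> ?V"
      by (rule sum_mono2) (use assms q in auto)
    finally show ?thesis by (cases "p \<le> q") (auto simp: max_def min_def)
  qed
  then have "real N * g p \<le> (\<Sum>q\<in>{1..N}. g q) + real N * ?V"
    using sum_mono[of "{1..N}" "\<lambda>_. g p" "\<lambda>q. g q + ?V"] by (simp add: sum.distrib)
  then show ?thesis using assms by (simp add: field_simps)
qed

lemma abs_norm_sq_diff_le: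
  fixes x y :: "'a::real_inner"
  assumes "\<mu> > 0"
  shows "\<bar>(norm y)\<^sup>2 - (norm x)\<^sup>2\<bar> \<le> \<mu> * (norm x)\<^sup>2 + (1 + 1/\<mu>) * (norm (y - x))\<^sup>2"
proof -
  have expand: "(norm y)\<^sup>2 = (norm x)\<^sup>2 + 2 * inner x (y - x) + (norm (y - x))\<^sup>2"
    by (simp add: power2_norm_eq_inner inner_diff algebra_simps inner_commute)
  have "2 * \<bar>inner x (y - x)\<bar> \<le> 2 * (norm x * norm (y - x))"
    using Cauchy_Schwarz_ineq2 by simp
  also have "\<dots> \<le> \<mu> * (norm x)\<^sup>2 + (1/\<mu>) * (norm (y - x))\<^sup>2"
  proof -
    have "0 \<le> (\<mu> * norm x - norm (y - x))\<^sup>2 / \<mu>" using assms by simp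
    also have "\<dots> = \<mu> * (norm x)\<^sup>2 - 2 * (norm x * norm (y - x)) + (1/\<mu>) * (norm (y - x))\<^sup>2"
      using assms by (simp add: power2_eq_square field_simps)
    finally show ?thesis by simp
  qed
  finally have "2 * \<bar>inner x (y - x)\<bar> \<le> \<mu> * (norm x)\<^sup>2 + (1/\<mu>) * (norm (y - x))\<^sup>2" .
  moreover have "(1 + 1/\<mu>) * (norm (y - x))\<^sup>2 = (norm (y - x))\<^sup>2 + (1/\<mu>) * (norm (y - x))\<^sup>2"
    by (simp add: algebra_simps)
  moreover have "0 \<le> (1/\<mu>) * (norm (y - x))\<^sup>2" using assms by simp
  ultimately show ?thesis
    using expand abs_ge_self[of "inner x (y - x)"] abs_ge_minus_self[of "inner x (y - x)"]
      zero_le_power2[of "norm (y - x)"]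
    by (simp only: abs_le_iff) linarith
qed

lemma slice_sum_le:
  fixes f :: "nat \<Rightarrow> 's \<Rightarrow> 'a::real_inner"
  assumes "p \<in> {1..N}" "\<mu> > 0"
  shows "(\<Sum>s\<in>S. (norm (f p s))\<^sup>2)
    \<le> (\<Sum>q\<in>{1..N}. \<Sum>s\<in>S. (norm (f q s))\<^sup>2) / real N
      + \<mu> * (\<Sum>q\<in>{1..N}. \<Sum>s\<in>S. (norm (f q s))\<^sup>2)
      + (1 + 1/\<mu>) * (\<Sum>q\<in>{1..N}. \<Sum>s\<in>S. (norm (f (Suc q) s - f q s))\<^sup>2)"
proof -
  define g where "g q = (\<Sum>s\<in>S. (norm (f q s))\<^sup>2)" for q
  define w where "w q = (\<Sum>s\<in>S. (norm (f (Suc q) s - f q s))\<^sup>2)" for q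
  have step: "\<bar>g (Suc q) - g q\<bar> \<le> \<mu> * g q + (1 + 1/\<mu>) * w q" for q
  proof -
    have "\<bar>g (Suc q) - g q\<bar> \<le> (\<Sum>s\<in>S. \<bar>(norm (f (Suc q) s))\<^sup>2 - (norm (f q s))\<^sup>2\<bar>)"
      unfolding g_def sum_subtractf[symmetric] by (rule sum_abs)
    also have "\<dots> \<le> (\<Sum>s\<in>S. \<mu> * (norm (f q s))\<^sup>2 + (1 + 1/\<mu>) * (norm (f (Suc q) s - f q s))\<^sup>2)"
      by (intro sum_mono abs_norm_sq_diff_le assms(2))
    also have "\<dots> = \<mu> * g q + (1 + 1/\<mu>) * w q"
      unfolding g_def w_def by (simp only: sum.distrib sum_distrib_left)
    finally show ?thesis .
  qed
  have "(\<Sum>q\<in>{1..N}. \<bar>g (Suc q) - g q\<bar>) \<le> (\<Sum>q\<in>{1..N}. \<mu> * g q + (1 + 1/\<mu>) * w q)"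
    by (intro sum_mono step)
  also have "\<dots> = \<mu> * (\<Sum>q\<in>{1..N}. g q) + (1 + 1/\<mu>) * (\<Sum>q\<in>{1..N}. w q)"
    by (simp only: sum.distrib sum_distrib_left)
  finally show ?thesis
    using le_mean_plus_variation[OF assms(1), of g] unfolding g_def w_def by linarith
qed

definition slice_const :: "real \<Rightarrow> real \<Rightarrow> real" where
  "slice_const B P = P * B + P + 2 * B"

definition sup_const :: "real \<Rightarrow> real" where
  "sup_const B = slice_const B (slice_const B (slice_const B B))"

lemma slice_const_nonneg: "0 \<le> B \<Longrightarrow> 0 \<le> P \<Longrightarrow> 0 \<le> slice_const B P"
  unfolding slice_const_def by simp

lemma sup_const_pos: "0 < B \<Longrightarrow> 0 < sup_const B"
  unfolding sup_const_def slice_const_def by (simp add: add_pos_pos)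

text \<open>The slice inequality with \<open>\<mu> = \<sigma>^j\<close>: the slice mass gains the factor \<open>\<sigma>^j\<close> as long as the
  variation, of order \<open>\<sigma>^14\<close>, still dominates \<open>\<sigma>^(m+2j)\<close>.\<close>

lemma slice_sum_le_power:
  fixes f :: "nat \<Rightarrow> 's \<Rightarrow> 'a::real_inner"
  assumes p: "p \<in> {1..N}" and \<sigma>: "0 < \<sigma>" "\<sigma> \<le> 1" and nonneg: "0 \<le> B" "0 \<le> P"
    and mass: "(\<Sum>q\<in>{1..N}. \<Sum>s\<in>S. (norm (f q s))\<^sup>2) \<le> P * \<sigma>^m"
    and var: "(\<Sum>q\<in>{1..N}. \<Sum>s\<in>S. (norm (f (Suc q) s - f q s))\<^sup>2) \<le> B * \<sigma>^14"
    and mesh: "1 / real N \<le> B * \<sigma>^8"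
    and exps: "m + 2 * j \<le> 14" "j \<le> 8"
  shows "(\<Sum>s\<in>S. (norm (f p s))\<^sup>2) \<le> slice_const B P * \<sigma>^(m + j)"
proof -
  define M where "M = (\<Sum>q\<in>{1..N}. \<Sum>s\<in>S. (norm (f q s))\<^sup>2)"
  define W where "W = (\<Sum>q\<in>{1..N}. \<Sum>s\<in>S. (norm (f (Suc q) s - f q s))\<^sup>2)"
  have M0: "0 \<le> M" and W0: "0 \<le> W" unfolding M_def W_def by (auto intro!: sum_nonneg)
  have pow_le: "\<sigma>^a \<le> \<sigma>^b" if "b \<le> a" for a b using \<sigma> that by (intro power_decreasing) auto
  have "M / real N \<le> (P * \<sigma>^m) * (B * \<sigma>^8)"
    using mass mesh M0 nonneg \<sigma> unfolding M_def[symmetric] divide_inverse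
    by (intro mult_mono) (auto simp: divide_inverse)
  also have "\<dots> = P * B * \<sigma>^(m + 8)" by (simp add: power_add)
  also have "\<dots> \<le> P * B * \<sigma>^(m + j)"
    using pow_le[of "m + j" "m + 8"] nonneg exps by (simp add: mult_left_mono)
  finally have T1: "M / real N \<le> P * B * \<sigma>^(m + j)" .
  have T2: "\<sigma>^j * M \<le> P * \<sigma>^(m + j)"
    using mult_left_mono[OF mass[folded M_def], of "\<sigma>^j"] \<sigma> by (simp add: power_add algebra_simps)
  have T3: "W \<le> B * \<sigma>^(m + j)"
  proof -
    have "B * \<sigma>^14 \<le> B * \<sigma>^(m + j)" using pow_le[of "m + j" 14] nonneg exps by (simp add: mult_left_mono)
    then show ?thesis using var unfolding W_def by linarith
  qed
  have "W / \<sigma>^j \<le> B * \<sigma>^14 / \<sigma>^j" using var \<sigma> unfolding W_def[symmetric] by (simp add: divide_right_mono)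
  also have "\<dots> = B * \<sigma>^(14 - j)"
    using \<sigma> exps by (simp add: power_diff)
  also have "\<dots> \<le> B * \<sigma>^(m + j)"
    using pow_le[of "m + j" "14 - j"] nonneg exps by (simp add: mult_left_mono)
  finally have T4: "W / \<sigma>^j \<le> B * \<sigma>^(m + j)" .
  have "(\<Sum>s\<in>S. (norm (f p s))\<^sup>2) \<le> M / real N + \<sigma>^j * M + (W + W / \<sigma>^j)"
    using slice_sum_le[OF p, where \<mu> = "\<sigma>^j" and S = S and f = f] \<sigma> unfolding M_def W_def by (simp add: algebra_simps)
  also have "\<dots> \<le> slice_const B P * \<sigma>^(m + j)"
    using T1 T2 T3 T4 unfolding slice_const_def by (simp add: algebra_simps)
  finally show ?thesis .
qed

lemma plane_sum_le_power:
  fixes f :: "nat \<Rightarrow> nat \<Rightarrow> nat \<Rightarrow> 'a::real_inner"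
  assumes \<sigma>: "0 < \<sigma>" "\<sigma> \<le> 1" and B: "0 \<le> B" and l: "l \<in> {1..N}"
    and mass: "grid_sum N (\<lambda>i j l. (norm (f i j l))\<^sup>2) \<le> B * \<sigma>^6"
    and var_z: "grid_sum N (\<lambda>i j l. (norm (f i j (Suc l) - f i j l))\<^sup>2) \<le> B * \<sigma>^14"
    and mesh: "1 / real N \<le> B * \<sigma>^8"
  shows "(\<Sum>i\<in>{1..N}. \<Sum>j\<in>{1..N}. (norm (f i j l))\<^sup>2) \<le> slice_const B B * \<sigma>^10"
proof -
  let ?I = "{1..N}"
  have cart: "(\<Sum>s\<in>?I \<times> ?I. (norm (f (fst s) (snd s) q))\<^sup>2) = (\<Sum>i\<in>?I. \<Sum>j\<in>?I. (norm (f i j q))\<^sup>2)"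
    and cart_diff: "(\<Sum>s\<in>?I \<times> ?I. (norm (f (fst s) (snd s) (Suc q) - f (fst s) (snd s) q))\<^sup>2)
      = (\<Sum>i\<in>?I. \<Sum>j\<in>?I. (norm (f i j (Suc q) - f i j q))\<^sup>2)" for q
    by (simp_all add: sum.cartesian_product split_def)
  have "(\<Sum>s\<in>?I \<times> ?I. (norm (f (fst s) (snd s) l))\<^sup>2) \<le> slice_const B B * \<sigma>^(6 + 4)"
  proof (rule slice_sum_le_power[OF l \<sigma> B B _ _ mesh])
    show "(\<Sum>q\<in>?I. \<Sum>s\<in>?I \<times> ?I. (norm (f (fst s) (snd s) q))\<^sup>2) \<le> B * \<sigma>^6"
      using mass by (simp only: cart grid_sum_outer_last)
    show "(\<Sum>q\<in>?I. \<Sum>s\<in>?I \<times> ?I. (norm (f (fst s) (snd s) (Suc q) - f (fst s) (snd s) q))\<^sup>2)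
        \<le> B * \<sigma>^14"
      using var_z by (simp only: cart_diff grid_sum_outer_last)
  qed simp_all
  then show ?thesis by (simp only: cart) simp
qed

lemma line_sum_le_power:
  fixes f :: "nat \<Rightarrow> nat \<Rightarrow> nat \<Rightarrow> 'a::real_inner"
  assumes \<sigma>: "0 < \<sigma>" "\<sigma> \<le> 1" and B: "0 \<le> B" and jl: "j \<in> {1..N}" "l \<in> {1..N}"
    and plane: "(\<Sum>i\<in>{1..N}. \<Sum>j\<in>{1..N}. (norm (f i j l))\<^sup>2) \<le> slice_const B B * \<sigma>^10"
    and var_y: "grid_sum N (\<lambda>i j l. (norm (f i (Suc j) l - f i j l))\<^sup>2) \<le> B * \<sigma>^14"
    and mesh: "1 / real N \<le> B * \<sigma>^8"
  shows "(\<Sum>i\<in>{1..N}. (norm (f i j l))\<^sup>2) \<le> slice_const B (slice_const B B) * \<sigma>^12"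
proof -
  let ?I = "{1..N}"
  have "(\<Sum>i\<in>?I. (norm (f i j l))\<^sup>2) \<le> slice_const B (slice_const B B) * \<sigma>^(10 + 2)"
  proof (rule slice_sum_le_power[OF jl(1) \<sigma> B slice_const_nonneg[OF B B] _ _ mesh])
    show "(\<Sum>q\<in>?I. \<Sum>i\<in>?I. (norm (f i q l))\<^sup>2) \<le> slice_const B B * \<sigma>^10"
      using plane by (subst sum.swap) simp
    have "(\<Sum>q\<in>?I. \<Sum>i\<in>?I. (norm (f i (Suc q) l - f i q l))\<^sup>2)
        \<le> grid_sum N (\<lambda>i j l. (norm (f i (Suc j) l - f i j l))\<^sup>2)"
      by (subst sum.swap) (rule plane_sum_le_grid_sum[OF jl(2)], simp)
    then show "(\<Sum>q\<in>?I. \<Sum>i\<in>?I. (norm (f i (Suc q) l - f i q l))\<^sup>2) \<le> B * \<sigma>^14"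
      using var_y by linarith
  qed simp_all
  then show ?thesis by simp
qed

text \<open>Discrete Sobolev argument: pass from the whole grid to a plane, a line and a point,
  gaining \<open>\<sigma>^4\<close>, \<open>\<sigma>^2\<close> and \<open>\<sigma>\<close> respectively.\<close>

lemma grid_sup_bound:
  fixes f :: "nat \<Rightarrow> nat \<Rightarrow> nat \<Rightarrow> 'a::real_inner"
  assumes \<sigma>: "0 < \<sigma>" "\<sigma> \<le> 1" and B: "0 \<le> B"
    and mass: "grid_sum N (\<lambda>i j l. (norm (f i j l))\<^sup>2) \<le> B * \<sigma>^6"
    and var_x: "grid_sum N (\<lambda>i j l. (norm (f (Suc i) j l - f i j l))\<^sup>2) \<le> B * \<sigma>^14"
    and var_y: "grid_sum N (\<lambda>i j l. (norm (f i (Suc j) l - f i j l))\<^sup>2) \<le> B * \<sigma>^14"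
    and var_z: "grid_sum N (\<lambda>i j l. (norm (f i j (Suc l) - f i j l))\<^sup>2) \<le> B * \<sigma>^14"
    and mesh: "1 / real N \<le> B * \<sigma>^8"
    and ijl: "i \<in> {1..N}" "j \<in> {1..N}" "l \<in> {1..N}"
  shows "(norm (f i j l))\<^sup>2 \<le> sup_const B * \<sigma>^13"
proof -
  note line = line_sum_le_power[OF \<sigma> B ijl(2,3) plane_sum_le_power[OF \<sigma> B ijl(3) mass var_z mesh] var_y mesh]
  have "(\<Sum>s\<in>{()}. (norm (f i j l))\<^sup>2) \<le> sup_const B * \<sigma>^(12 + 1)"
    unfolding sup_const_def
  proof (rule slice_sum_le_power[OF ijl(1) \<sigma> B slice_const_nonneg[OF B slice_const_nonneg[OF B B]] _ _ mesh])
    show "(\<Sum>q\<in>{1..N}. \<Sum>s\<in>{()}. (norm (f q j l))\<^sup>2) \<le> slice_const B (slice_const B B) * \<sigma>^12"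
      using line by simp
    have "(\<Sum>q\<in>{1..N}. (norm (f (Suc q) j l - f q j l))\<^sup>2)
        \<le> grid_sum N (\<lambda>i j l. (norm (f (Suc i) j l - f i j l))\<^sup>2)"
      by (rule line_sum_le_grid_sum[OF ijl(2,3)]) simp
    then show "(\<Sum>q\<in>{1..N}. \<Sum>s\<in>{()}. (norm (f (Suc q) j l - f q j l))\<^sup>2) \<le> B * \<sigma>^14"
      using var_x by simp
  qed simp_all
  then show ?thesis by simp
qed

section \<open>Normalisation near the unit sphere\<close>

lemma normalize_near_unit:
  fixes a b :: "'a::real_inner"
  assumes "norm a = 1" "norm (a - b) < 1"
  shows "b \<noteq> 0" "norm (b /\<^sub>R norm b) = 1" "b = norm b *\<^sub>R (b /\<^sub>R norm b)"
    "\<bar>1 - norm b\<bar> \<le> norm (a - b)"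
    "norm (a - b /\<^sub>R norm b) \<le> 2 * norm (a - b)"
proof -
  have t: "\<bar>norm a - norm b\<bar> \<le> norm (a - b)" by (rule norm_triangle_ineq3)
  then show b: "b \<noteq> 0" using assms by auto
  show u: "norm (b /\<^sub>R norm b) = 1" using b by simp
  show "b = norm b *\<^sub>R (b /\<^sub>R norm b)" using b by simp
  show "\<bar>1 - norm b\<bar> \<le> norm (a - b)" using t assms by simp
  have "norm (b - b /\<^sub>R norm b) = \<bar>1 - norm b\<bar>"
  proof -
    have "b - b /\<^sub>R norm b = (norm b - 1) *\<^sub>R (b /\<^sub>R norm b)" using b by (simp add: algebra_simps)
    moreover have "norm ((norm b - 1) *\<^sub>R (b /\<^sub>R norm b)) = \<bar>1 - norm b\<bar>"
      using b by (simp add: abs_mult abs_minus_commute)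
    ultimately show ?thesis by (simp only:)
  qed
  moreover have "norm (a - b /\<^sub>R norm b) \<le> norm (a - b) + norm (b - b /\<^sub>R norm b)"
    by (metis diff_add_cancel norm_triangle_ineq add_diff_eq)
  ultimately show "norm (a - b /\<^sub>R norm b) \<le> 2 * norm (a - b)" using t assms by simp
qed

lemma weighted_split_le:
  fixes E \<rho> u \<epsilon> \<eta> :: real
  assumes E: "0 \<le> E" and \<rho>: "1/2 \<le> \<rho>" and D: "\<rho> * E + (1 - \<rho>)\<^sup>2 \<le> u"
    and ue: "2 * u \<le> \<eta> * \<epsilon>" and \<epsilon>: "0 \<le> \<epsilon>" and \<eta>: "0 \<le> \<eta>"
  shows "(1 - \<epsilon>) * E + (1 - \<eta>) * (1 - \<rho>)\<^sup>2 \<le> \<rho> * E + (1 - \<rho>)\<^sup>2"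
proof (cases "\<rho> \<ge> 1 - \<epsilon>")
  case True
  then show ?thesis
    using E \<eta> mult_right_mono[of "1 - \<epsilon>" \<rho> E] mult_right_mono[of "1 - \<eta>" 1 "(1 - \<rho>)\<^sup>2"] by simp
next
  case False
  define t where "t = 1 - \<rho>"
  have t: "t > \<epsilon>" using False unfolding t_def by simp
  have "(1/2) * E \<le> \<rho> * E" using \<rho> E by (rule mult_right_mono)
  then have E2: "E \<le> 2 * u" using D zero_le_power2[of "1 - \<rho>"] by linarith
  have "(t - \<epsilon>) * E \<le> t * E" using E \<epsilon> by (simp add: algebra_simps)
  also have "\<dots> \<le> t * (2 * u)" using E2 t \<epsilon> by (simp add: mult_left_mono)
  also have "\<dots> \<le> t * (\<eta> * \<epsilon>)" using ue t \<epsilon> by (simp add: mult_left_mono)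
  also have "\<dots> \<le> t * (\<eta> * t)" using t \<epsilon> \<eta> by (intro mult_left_mono) auto
  finally show ?thesis unfolding t_def by (simp add: power2_eq_square algebra_simps)
qed

text \<open>Writing \<open>b = \<rho> v\<close> with \<open>v\<close> a unit vector, \<open>|a - b|\<^sup>2 = \<rho> |a - v|\<^sup>2 + (1 - \<rho>)\<^sup>2\<close>; the
  tangential part \<open>|a - v|\<^sup>2\<close> is weighted by \<open>\<rho> \<approx> 1\<close> and the normal part \<open>(1 - \<rho>)\<^sup>2\<close> is exactly
  \<open>|(a - b) - (a - v)|\<^sup>2\<close>.\<close>

lemma sq_dist_ge_normalized_split:
  fixes a b :: "'a::real_inner"
  assumes a: "norm a = 1" and u: "(norm (a - b))\<^sup>2 \<le> u" and u4: "u \<le> 1/4"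
    and ue: "2 * u \<le> \<eta> * \<epsilon>" and "0 \<le> \<epsilon>" "0 \<le> \<eta>"
  shows "(1 - \<epsilon>) * (norm (a - b /\<^sub>R norm b))\<^sup>2 + (1 - \<eta>) * (norm ((a - b) - (a - b /\<^sub>R norm b)))\<^sup>2
    \<le> (norm (a - b))\<^sup>2"
proof -
  have "norm (a - b) \<le> 1/2"
    by (rule power2_le_imp_le) (use u u4 in \<open>simp_all add: power2_eq_square\<close>)
  then have "norm (a - b) < 1" by simp
  note nf = normalize_near_unit[OF a this]
  define \<rho> where "\<rho> = norm b"
  define v where "v = b /\<^sub>R \<rho>"
  define E where "E = (norm (a - v))\<^sup>2"
  have v1: "inner v v = 1" using nf(2) unfolding v_def \<rho>_def by (simp add: dot_square_norm)
  have a1: "inner a a = 1" using a by (simp add: dot_square_norm)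
  have bv: "b = \<rho> *\<^sub>R v" unfolding v_def \<rho>_def by (rule nf(3))
  have \<rho>: "\<rho> \<ge> 1/2" using nf(4) \<open>norm (a - b) \<le> 1/2\<close> unfolding \<rho>_def by linarith
  have D: "(norm (a - b))\<^sup>2 = \<rho> * E + (1 - \<rho>)\<^sup>2"
    unfolding bv E_def power2_norm_eq_inner
    by (simp add: inner_diff_left inner_diff_right a1 v1 inner_commute[of v a] power2_eq_square
        algebra_simps)
  have T: "(norm ((a - b) - (a - v)))\<^sup>2 = (1 - \<rho>)\<^sup>2"
  proof -
    have "(a - b) - (a - v) = (1 - \<rho>) *\<^sub>R v" unfolding bv by (simp add: algebra_simps)
    moreover have "norm v = 1" using nf(2) unfolding v_def \<rho>_def .
    ultimately show ?thesis by (simp only: norm_scaleR) simp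
  qed
  have "(1 - \<epsilon>) * E + (1 - \<eta>) * (1 - \<rho>)\<^sup>2 \<le> \<rho> * E + (1 - \<rho>)\<^sup>2"
    using D u ue assms(5,6) \<rho> unfolding E_def by (intro weighted_split_le) auto
  then show ?thesis using D T unfolding E_def v_def \<rho>_def by simp
qed

lemma radial_defect_eq:
  fixes ap aq vp vq :: "'a::real_inner"
  assumes "norm ap = 1" "norm aq = 1" "norm vp = 1" "norm vq = 1"
  shows "(\<rho>q - \<rho>p) + inner vq ((aq - \<rho>q *\<^sub>R vq) - (ap - \<rho>p *\<^sub>R vp))
    = (1 - \<rho>p) * (norm (aq - ap))\<^sup>2 / 2 - inner (aq - vq) (aq - ap)
      + \<rho>p * inner (aq - ap) ((aq - vq) - (ap - vp)) - \<rho>p * (norm ((aq - vq) - (ap - vp)))\<^sup>2 / 2"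
proof -
  have unit: "inner ap ap = 1" "inner aq aq = 1" "inner vp vp = 1" "inner vq vq = 1"
    using assms by (simp_all add: dot_square_norm)
  show ?thesis
    unfolding power2_norm_eq_inner
    by (simp only: inner_diff_left inner_diff_right inner_scaleR_left inner_scaleR_right,
        simp only: unit inner_commute[of aq ap] inner_commute[of vp ap] inner_commute[of vq ap]
          inner_commute[of vp aq] inner_commute[of vq aq] inner_commute[of vq vp],
        simp add: field_simps)
qed

lemma radial_defect_le:
  fixes ap aq vp vq :: "'a::real_inner"
  assumes unit: "norm ap = 1" "norm aq = 1" "norm vp = 1" "norm vq = 1" and \<rho>p: "0 \<le> \<rho>p"
  shows "\<bar>(\<rho>q - \<rho>p) + inner vq ((aq - \<rho>q *\<^sub>R vq) - (ap - \<rho>p *\<^sub>R vp))\<bar>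
    \<le> \<bar>1 - \<rho>p\<bar> * (norm (aq - ap))\<^sup>2 / 2 + norm (aq - vq) * norm (aq - ap)
      + \<rho>p * (norm (aq - ap) * norm ((aq - vq) - (ap - vp)))
      + \<rho>p * (norm ((aq - vq) - (ap - vp)))\<^sup>2 / 2"
proof -
  define na ne where "na = norm (aq - ap)" and "ne = norm ((aq - vq) - (ap - vp))"
  let ?x = "inner (aq - vq) (aq - ap)" and ?y = "inner (aq - ap) ((aq - vq) - (ap - vp))"
  have x: "\<bar>?x\<bar> \<le> norm (aq - vq) * na" and "\<bar>?y\<bar> \<le> na * ne"
    unfolding na_def ne_def by (rule Cauchy_Schwarz_ineq2)+
  then have y: "\<bar>\<rho>p * ?y\<bar> \<le> \<rho>p * (na * ne)" using \<rho>p by (simp add: abs_mult mult_left_mono)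
  have t: "\<bar>(1 - \<rho>p) * na\<^sup>2 / 2\<bar> = \<bar>1 - \<rho>p\<bar> * na\<^sup>2 / 2" by (simp add: abs_mult)
  have w: "\<bar>\<rho>p * ne\<^sup>2 / 2\<bar> = \<rho>p * ne\<^sup>2 / 2" using \<rho>p by simp
  have tri4: "\<bar>p - q + r - s\<bar> \<le> \<bar>p\<bar> + \<bar>q\<bar> + \<bar>r\<bar> + \<bar>s\<bar>" for p q r s :: real by arith
  show ?thesis
    using tri4[of "(1 - \<rho>p) * na\<^sup>2 / 2" ?x "\<rho>p * ?y" "\<rho>p * ne\<^sup>2 / 2"] x y t w
    unfolding radial_defect_eq[OF unit] na_def ne_def by linarith
qed

text \<open>The radial part of \<open>dq - dp\<close> cancels against \<open>\<rho>q - \<rho>p\<close>; what remains is the radial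
  defect, which is of second order by \<open>radial_defect_le\<close>.\<close>

lemma normalized_diff_le_tangential:
  fixes ap aq vp vq :: "'a::real_inner"
  assumes vq: "norm vq = 1" and d: "dp = ap - \<rho>p *\<^sub>R vp" "dq = aq - \<rho>q *\<^sub>R vq"
  shows "norm ((aq - vq) - (ap - vp))
    \<le> norm (dq - dp) + \<bar>(\<rho>q - \<rho>p) + inner vq (dq - dp)\<bar> + \<bar>1 - \<rho>p\<bar> * norm (vq - vp)"
proof -
  define D where "D = dq - dp"
  define P where "P = D - inner vq D *\<^sub>R vq"
  define c where "c = (\<rho>q - \<rho>p) + inner vq D"
  have "(aq - vq) - (ap - vp) = P + c *\<^sub>R vq - (1 - \<rho>p) *\<^sub>R (vq - vp)"
    unfolding P_def c_def D_def d by (simp add: algebra_simps)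
  then have "norm ((aq - vq) - (ap - vp)) \<le> norm P + norm (c *\<^sub>R vq) + norm ((1 - \<rho>p) *\<^sub>R (vq - vp))"
    by (metis norm_triangle_ineq norm_triangle_ineq4 add_right_mono order_trans)
  moreover have "norm P \<le> norm D"
  proof (rule power2_le_imp_le)
    have "inner vq vq = 1" using vq by (simp add: dot_square_norm)
    then show "(norm P)\<^sup>2 \<le> (norm D)\<^sup>2"
      unfolding P_def power2_norm_eq_inner
      by (simp add: inner_diff_left inner_diff_right inner_commute[of D vq] power2_eq_square
          algebra_simps)
  qed simp
  ultimately show ?thesis using vq unfolding c_def D_def by simp
qed

lemma first_order_arith:
  fixes ne nd c \<tau> dv na eq rp rq R \<rho> :: real
  assumes tri: "ne \<le> nd + c + \<tau> * dv"
    and c: "c \<le> \<tau> * na\<^sup>2 / 2 + eq * na + \<rho> * (na * ne) + \<rho> * ne\<^sup>2 / 2"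
    and dv: "dv \<le> na + ne"
    and \<tau>: "0 \<le> \<tau>" "\<tau> \<le> rp" and r: "rp \<le> R" "rq \<le> R" and eq: "eq \<le> 2 * rq"
    and \<rho>: "0 \<le> \<rho>" "\<rho> \<le> 5/4" and na: "0 \<le> na" "na \<le> 2" and ne: "0 \<le> ne" "ne \<le> 4 * R"
  shows "ne * (1 - 2 * na - 5 * R) \<le> nd + 2 * (rp + rq) * na"
proof -
  have P1: "\<tau> * na\<^sup>2 / 2 \<le> rp * na"
  proof -
    have "\<tau> * na\<^sup>2 / 2 = (\<tau> * na) * (na / 2)" by (simp add: power2_eq_square)
    also have "\<dots> \<le> (rp * na) * 1" using \<tau> na by (intro mult_mono mult_right_mono) auto
    finally show ?thesis by simp
  qed
  have P2: "eq * na \<le> 2 * rq * na" using eq na by (simp add: mult_right_mono)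
  have P3: "\<rho> * (na * ne) \<le> 2 * (na * ne)" using \<rho> na ne by (intro mult_right_mono) auto
  have P4: "\<rho> * ne\<^sup>2 / 2 \<le> 4 * R * ne"
  proof -
    have "\<rho> * ne\<^sup>2 \<le> 2 * ne\<^sup>2" using \<rho> by (intro mult_right_mono) auto
    then have "\<rho> * ne\<^sup>2 / 2 \<le> ne * ne" by (simp add: power2_eq_square)
    also have "\<dots> \<le> 4 * R * ne" using ne by (simp add: mult_right_mono)
    finally show ?thesis .
  qed
  have P5: "\<tau> * dv \<le> rp * na + R * ne"
  proof -
    have "\<tau> * dv \<le> \<tau> * na + \<tau> * ne" using dv \<tau> by (simp add: mult_left_mono flip: distrib_left)
    also have "\<tau> * na \<le> rp * na" using \<tau> na by (simp add: mult_right_mono)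
    also have "\<tau> * ne \<le> R * ne" using \<tau> r ne by (simp add: mult_right_mono)
    finally show ?thesis by simp
  qed
  have "ne * (1 - 2 * na - 5 * R) = ne - 2 * (na * ne) - 5 * (R * ne)"
    and "2 * (rp + rq) * na = 2 * (rp * na) + 2 * (rq * na)"
    by (simp_all add: algebra_simps)
  then show ?thesis using tri c P1 P2 P3 P4 P5 by linarith
qed

lemma normalized_diff_first_order:
  fixes ap aq dp dq :: "'a::real_inner"
  assumes a: "norm ap = 1" "norm aq = 1" and r: "norm dp \<le> R" "norm dq \<le> R" "R \<le> 1/4"
  shows "norm ((aq - (aq - dq) /\<^sub>R norm (aq - dq)) - (ap - (ap - dp) /\<^sub>R norm (ap - dp)))
      * (1 - 2 * norm (aq - ap) - 5 * R)
    \<le> norm (dq - dp) + 2 * (norm dp + norm dq) * norm (aq - ap)"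
proof -
  have "norm (ap - (ap - dp)) < 1" "norm (aq - (aq - dq)) < 1" using r by simp_all
  note nfp = normalize_near_unit[OF a(1) this(1)] and nfq = normalize_near_unit[OF a(2) this(2)]
  define \<rho>p where "\<rho>p = norm (ap - dp)"
  define \<rho>q where "\<rho>q = norm (aq - dq)"
  define vp where "vp = (ap - dp) /\<^sub>R \<rho>p"
  define vq where "vq = (aq - dq) /\<^sub>R \<rho>q"
  have v: "norm vp = 1" "norm vq = 1"
    unfolding vp_def vq_def \<rho>p_def \<rho>q_def by (fact nfp(2), fact nfq(2))
  have b: "\<rho>p *\<^sub>R vp = ap - dp" "\<rho>q *\<^sub>R vq = aq - dq"
    unfolding vp_def vq_def \<rho>p_def \<rho>q_def by (fact nfp(3)[symmetric], fact nfq(3)[symmetric])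
  have d: "dp = ap - \<rho>p *\<^sub>R vp" "dq = aq - \<rho>q *\<^sub>R vq" unfolding b by simp_all
  have \<tau>: "\<bar>1 - \<rho>p\<bar> \<le> norm dp" using nfp(4) unfolding \<rho>p_def by simp
  have ep: "norm (ap - vp) \<le> 2 * norm dp" and eq: "norm (aq - vq) \<le> 2 * norm dq"
    using nfp(5) nfq(5) unfolding vp_def vq_def \<rho>p_def \<rho>q_def by simp_all
  have \<rho>p: "\<rho>p \<le> 5/4" using norm_triangle_ineq4[of ap dp] a r unfolding \<rho>p_def by simp
  define na where "na = norm (aq - ap)"
  define ne where "ne = norm ((aq - vq) - (ap - vp))"
  define c where "c = (\<rho>q - \<rho>p) + inner vq (dq - dp)"
  have c: "\<bar>c\<bar> \<le> \<bar>1 - \<rho>p\<bar> * na\<^sup>2 / 2 + norm (aq - vq) * na + \<rho>p * (na * ne) + \<rho>p * ne\<^sup>2 / 2"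
    unfolding c_def na_def ne_def d by (rule radial_defect_le[OF a v]) (simp add: \<rho>p_def)
  have "ne \<le> norm (dq - dp) + \<bar>c\<bar> + \<bar>1 - \<rho>p\<bar> * norm (vq - vp)"
    unfolding ne_def c_def by (rule normalized_diff_le_tangential[OF v(2) d])
  moreover have "norm (vq - vp) \<le> na + ne"
    using norm_triangle_ineq4[of "aq - ap" "(aq - vq) - (ap - vp)"] unfolding na_def ne_def
    by (simp add: algebra_simps)
  moreover have "na \<le> 2" using norm_triangle_ineq4[of aq ap] a unfolding na_def by simp
  moreover have "ne \<le> 4 * R"
    using norm_triangle_ineq4[of "aq - vq" "ap - vp"] ep eq r unfolding ne_def by linarith
  ultimately have "ne * (1 - 2 * na - 5 * R) \<le> norm (dq - dp) + 2 * (norm dp + norm dq) * na"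
    using \<tau> c eq r \<rho>p
    by (intro first_order_arith[where \<rho> = \<rho>p and rp = "norm dp" and rq = "norm dq" and eq = "norm (aq - vq)"])
      (auto simp: na_def ne_def \<rho>p_def)
  then show ?thesis unfolding ne_def na_def vp_def vq_def \<rho>p_def \<rho>q_def .
qed

lemma sq_le_of_mult_one_minus_le:
  fixes x y \<kappa> :: real
  assumes \<kappa>: "0 \<le> \<kappa>" "\<kappa> \<le> 1/4" and nonneg: "0 \<le> x" and le: "x * (1 - \<kappa>) \<le> y"
  shows "x\<^sup>2 \<le> (1 + 4 * \<kappa>) * y\<^sup>2"
proof -
  have "1 \<le> (1 + 4 * \<kappa>) * (1 - \<kappa>)\<^sup>2"
  proof -
    have "(1 + 4 * \<kappa>) * (1 - \<kappa>)\<^sup>2 = 1 + \<kappa> * (2 - 7 * \<kappa> + 4 * \<kappa>\<^sup>2)"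
      by (simp add: power2_eq_square algebra_simps)
    moreover have "0 \<le> \<kappa> * (2 - 7 * \<kappa> + 4 * \<kappa>\<^sup>2)" using \<kappa> by (intro mult_nonneg_nonneg) auto
    ultimately show ?thesis by simp
  qed
  then have "x\<^sup>2 \<le> x\<^sup>2 * ((1 + 4 * \<kappa>) * (1 - \<kappa>)\<^sup>2)" by (simp add: mult_le_cancel_left1)
  also have "\<dots> = (1 + 4 * \<kappa>) * (x * (1 - \<kappa>))\<^sup>2"
    by (simp only: power_mult_distrib mult.commute mult.left_commute mult.assoc)
  also have "\<dots> \<le> (1 + 4 * \<kappa>) * y\<^sup>2"
    using power_mono[OF le] nonneg \<kappa> by (intro mult_left_mono) auto
  finally show ?thesis .
qed

lemma sq_add_le_weighted:
  fixes x y t :: real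
  assumes "0 < t"
  shows "(x + y)\<^sup>2 \<le> (1 + t) * x\<^sup>2 + (1 + 1/t) * y\<^sup>2"
proof -
  have "0 \<le> t * (x - y / t)\<^sup>2" using assms by simp
  also have "\<dots> = t * x\<^sup>2 - 2 * x * y + (1/t) * y\<^sup>2"
    using assms by (simp add: power2_eq_square field_simps)
  finally show ?thesis by (simp add: power2_eq_square algebra_simps)
qed

lemma sq_le_of_linear_perturbation:
  fixes ne nd Y \<kappa> \<delta> \<delta>1 :: real
  assumes \<kappa>: "0 \<le> \<kappa>" "\<kappa> \<le> \<delta>1 / 12" and \<delta>1: "0 < \<delta>1" "\<delta>1 \<le> 1" "\<delta>1 \<le> \<delta>"
    and nonneg: "0 \<le> ne" and lin: "ne * (1 - \<kappa>) \<le> nd + Y"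
  shows "ne\<^sup>2 \<le> (1 + \<delta>) * nd\<^sup>2 + 2 * (1 + 3/\<delta>1) * Y\<^sup>2"
proof -
  let ?t = "\<delta>1 / 3"
  have "ne\<^sup>2 \<le> (1 + 4 * \<kappa>) * (nd + Y)\<^sup>2"
    using \<kappa> \<delta>1 nonneg lin by (intro sq_le_of_mult_one_minus_le) auto
  also have "\<dots> \<le> (1 + ?t) * (nd + Y)\<^sup>2" using \<kappa> by (intro mult_right_mono) auto
  also have "\<dots> \<le> (1 + ?t) * ((1 + ?t) * nd\<^sup>2 + (1 + 3/\<delta>1) * Y\<^sup>2)"
    using sq_add_le_weighted[of ?t nd Y] \<delta>1 by (intro mult_left_mono) auto
  also have "\<dots> = ((1 + ?t) * (1 + ?t)) * nd\<^sup>2 + (1 + ?t) * ((1 + 3/\<delta>1) * Y\<^sup>2)"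
    by (rule trans[OF distrib_left]) (simp only: mult.assoc)
  also have "\<dots> \<le> (1 + \<delta>) * nd\<^sup>2 + 2 * ((1 + 3/\<delta>1) * Y\<^sup>2)"
  proof (rule add_mono)
    have "\<delta>1 * \<delta>1 \<le> \<delta>1" using \<delta>1 by (intro mult_right_le_one_le) auto
    moreover have "(1 + ?t) * (1 + ?t) = 1 + 2 * \<delta>1 / 3 + \<delta>1 * \<delta>1 / 9" by (simp add: algebra_simps)
    ultimately have "(1 + ?t) * (1 + ?t) \<le> 1 + \<delta>" using \<delta>1 by linarith
    then show "((1 + ?t) * (1 + ?t)) * nd\<^sup>2 \<le> (1 + \<delta>) * nd\<^sup>2" by (rule mult_right_mono) simp
    show "(1 + ?t) * ((1 + 3/\<delta>1) * Y\<^sup>2) \<le> 2 * ((1 + 3/\<delta>1) * Y\<^sup>2)"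
      using \<delta>1 by (intro mult_right_mono) auto
  qed
  finally show ?thesis by (simp only: mult.assoc)
qed

lemma normalized_diff_sq_le_fine:
  fixes ap aq bp bq :: "'a::real_inner"
  assumes a: "norm ap = 1" "norm aq = 1"
    and r: "norm (ap - bp) \<le> \<epsilon>" "norm (aq - bq) \<le> \<epsilon>" and na: "norm (aq - ap) \<le> \<epsilon>"
    and \<epsilon>: "\<epsilon> = \<delta>1 / 120" and \<delta>1: "0 < \<delta>1" "\<delta>1 \<le> 1" "\<delta>1 \<le> \<delta>"
  shows "(norm ((aq - bq /\<^sub>R norm bq) - (ap - bp /\<^sub>R norm bp)))\<^sup>2
    \<le> (1 + \<delta>) * (norm ((aq - bq) - (ap - bp)))\<^sup>2
      + 16 * (1 + 3/\<delta>1) * (norm (aq - ap))\<^sup>2 * ((norm (ap - bp))\<^sup>2 + (norm (aq - bq))\<^sup>2)"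
proof -
  define r1 r2 n where "r1 = norm (ap - bp)" and "r2 = norm (aq - bq)" and "n = norm (aq - ap)"
  have "\<epsilon> \<le> 1/4" using \<epsilon> \<delta>1 by simp
  note first_order = normalized_diff_first_order[OF a r this]
  have "ap - (ap - bp) = bp" "aq - (aq - bq) = bq" by simp_all
  then have "norm ((aq - bq /\<^sub>R norm bq) - (ap - bp /\<^sub>R norm bp)) * (1 - (2 * n + 5 * \<epsilon>))
      \<le> norm ((aq - bq) - (ap - bp)) + 2 * (r1 + r2) * n"
    using first_order unfolding r1_def r2_def n_def diff_diff_eq
    by (simp only:)
  then have "(norm ((aq - bq /\<^sub>R norm bq) - (ap - bp /\<^sub>R norm bp)))\<^sup>2
      \<le> (1 + \<delta>) * (norm ((aq - bq) - (ap - bp)))\<^sup>2 + 2 * (1 + 3/\<delta>1) * (2 * (r1 + r2) * n)\<^sup>2"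
    using na \<epsilon> \<delta>1 unfolding n_def r1_def r2_def
    by (intro sq_le_of_linear_perturbation) auto
  moreover have "2 * (1 + 3/\<delta>1) * (2 * (r1 + r2) * n)\<^sup>2 \<le> 16 * (1 + 3/\<delta>1) * n\<^sup>2 * (r1\<^sup>2 + r2\<^sup>2)"
  proof -
    define K where "K = 1 + 3/\<delta>1"
    have "0 \<le> K" unfolding K_def using \<delta>1 by simp
    have "(r1 + r2)\<^sup>2 \<le> 2 * (r1\<^sup>2 + r2\<^sup>2)"
      using zero_le_power2[of "r1 - r2"] by (simp add: power2_eq_square algebra_simps)
    then have "8 * K * n\<^sup>2 * (r1 + r2)\<^sup>2 \<le> 8 * K * n\<^sup>2 * (2 * (r1\<^sup>2 + r2\<^sup>2))"
      using \<open>0 \<le> K\<close> by (intro mult_left_mono) auto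
    then show ?thesis unfolding K_def[symmetric] by (simp add: power2_eq_square algebra_simps)
  qed
  ultimately show ?thesis unfolding n_def r1_def r2_def by linarith
qed

lemma normalized_diff_sq_le_small_mesh:
  fixes ap aq bp bq :: "'a::real_inner"
  assumes a: "norm ap = 1" "norm aq = 1" and na: "norm (aq - ap) \<le> L * h"
    and r: "(norm (ap - bp))\<^sup>2 \<le> R" "(norm (aq - bq))\<^sup>2 \<le> R" and small: "R \<le> \<epsilon>\<^sup>2" "L * h \<le> \<epsilon>"
    and \<epsilon>: "\<epsilon> = \<delta>1 / 120" and \<delta>1: "0 < \<delta>1" "\<delta>1 \<le> 1" "\<delta>1 \<le> \<delta>"
  shows "(norm ((aq - bq /\<^sub>R norm bq) - (ap - bp /\<^sub>R norm bp)))\<^sup>2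
    \<le> (1 + \<delta>) * (norm ((aq - bq) - (ap - bp)))\<^sup>2
      + 16 * (1 + 3/\<delta>1) * (L * h)\<^sup>2 * ((norm (ap - bp))\<^sup>2 + (norm (aq - bq))\<^sup>2)"
proof -
  have "0 < \<epsilon>" using \<epsilon> \<delta>1 by simp
  have "(norm (ap - bp))\<^sup>2 \<le> \<epsilon>\<^sup>2" "(norm (aq - bq))\<^sup>2 \<le> \<epsilon>\<^sup>2" using r small by linarith+
  then have r\<epsilon>: "norm (ap - bp) \<le> \<epsilon>" "norm (aq - bq) \<le> \<epsilon>"
    using power2_le_imp_le \<open>0 < \<epsilon>\<close> less_imp_le by blast+
  have "norm (aq - ap) \<le> \<epsilon>" using na small by linarith
  note fine = normalized_diff_sq_le_fine[OF a r\<epsilon> this \<epsilon> \<delta>1]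
  have "16 * (1 + 3/\<delta>1) * (norm (aq - ap))\<^sup>2 * ((norm (ap - bp))\<^sup>2 + (norm (aq - bq))\<^sup>2)
      \<le> 16 * (1 + 3/\<delta>1) * (L * h)\<^sup>2 * ((norm (ap - bp))\<^sup>2 + (norm (aq - bq))\<^sup>2)"
    using na \<delta>1 by (intro mult_right_mono mult_left_mono power_mono) auto
  then show ?thesis using fine by linarith
qed

lemma normalized_diff_sq_le_crude:
  fixes ap aq bp bq :: "'a::real_inner"
  assumes a: "norm ap = 1" "norm aq = 1" and r: "(norm (ap - bp))\<^sup>2 \<le> 1/4" "(norm (aq - bq))\<^sup>2 \<le> 1/4"
  shows "(norm ((aq - bq /\<^sub>R norm bq) - (ap - bp /\<^sub>R norm bp)))\<^sup>2
    \<le> 8 * ((norm (ap - bp))\<^sup>2 + (norm (aq - bq))\<^sup>2)"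
proof -
  define r1 r2 where "r1 = norm (ap - bp)" and "r2 = norm (aq - bq)"
  have "norm (ap - bp) < 1" "norm (aq - bq) < 1"
    using r by (auto intro!: power2_less_imp_less[of _ 1])
  then have "norm ((aq - bq /\<^sub>R norm bq) - (ap - bp /\<^sub>R norm bp)) \<le> 2 * r1 + 2 * r2"
    using normalize_near_unit(5)[OF a(1)] normalize_near_unit(5)[OF a(2)]
      norm_triangle_ineq4[of "aq - bq /\<^sub>R norm bq" "ap - bp /\<^sub>R norm bp"]
    unfolding r1_def r2_def by fastforce
  then have "(norm ((aq - bq /\<^sub>R norm bq) - (ap - bp /\<^sub>R norm bp)))\<^sup>2 \<le> (2 * r1 + 2 * r2)\<^sup>2"
    by (rule power_mono) simp
  also have "\<dots> \<le> 8 * (r1\<^sup>2 + r2\<^sup>2)"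
    using zero_le_power2[of "r1 - r2"] by (simp add: power2_eq_square algebra_simps)
  finally show ?thesis unfolding r1_def r2_def .
qed

text \<open>The constant \<open>C\<^sub>\<delta>\<close> of the gradient estimate (up to the factor 9 from summation): below the
  mesh size \<open>h0\<close> the linearisation of the normalisation applies, above it the crude bound
  costs \<open>8 / h0\<^sup>2\<close>.\<close>

definition grad_const :: "real \<Rightarrow> real \<Rightarrow> real \<Rightarrow> real" where
  "grad_const L A \<delta> =
    (let \<delta>1 = min \<delta> 1; \<epsilon> = \<delta>1 / 120; h0 = min (\<epsilon> / (L + 1)) (\<epsilon>\<^sup>2 / (A + 1))
     in 16 * (1 + 3/\<delta>1) * L\<^sup>2 + 8 / h0\<^sup>2)"

lemma grad_const_nonneg: "0 < \<delta> \<Longrightarrow> 0 \<le> grad_const L A \<delta>"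
  unfolding grad_const_def Let_def by simp

lemma norm_scaleR_inverse_sq: "h > 0 \<Longrightarrow> (norm (x /\<^sub>R h))\<^sup>2 = (norm x)\<^sup>2 / h\<^sup>2"
  by (simp add: power_mult_distrib power_inverse divide_inverse mult.commute)

lemma normalized_diff_quotient_le:
  fixes ap aq bp bq :: "'a::real_inner"
  assumes a: "norm ap = 1" "norm aq = 1" and na: "norm (aq - ap) \<le> L * h"
    and r: "(norm (ap - bp))\<^sup>2 \<le> R" "(norm (aq - bq))\<^sup>2 \<le> R" and R: "R \<le> 1/4" "R \<le> A * h"
    and pos: "0 < h" "0 \<le> L" "0 \<le> A" "0 < \<delta>"
  shows "(norm (((aq - bq /\<^sub>R norm bq) - (ap - bp /\<^sub>R norm bp)) /\<^sub>R h))\<^sup>2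
    \<le> (1 + \<delta>) * (norm (((aq - bq) - (ap - bp)) /\<^sub>R h))\<^sup>2
      + grad_const L A \<delta> * ((norm (ap - bp))\<^sup>2 + (norm (aq - bq))\<^sup>2)"
proof -
  define \<delta>1 where "\<delta>1 = min \<delta> 1"
  define \<epsilon> where "\<epsilon> = \<delta>1 / 120"
  define h0 where "h0 = min (\<epsilon> / (L + 1)) (\<epsilon>\<^sup>2 / (A + 1))"
  define S where "S = (norm (ap - bp))\<^sup>2 + (norm (aq - bq))\<^sup>2"
  define ne where "ne = norm ((aq - bq /\<^sub>R norm bq) - (ap - bp /\<^sub>R norm bp))"
  define nd where "nd = norm ((aq - bq) - (ap - bp))"
  have \<delta>1: "0 < \<delta>1" "\<delta>1 \<le> 1" "\<delta>1 \<le> \<delta>" and \<epsilon>0: "0 < \<epsilon>" and h0: "0 < h0"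
    using pos unfolding \<delta>1_def \<epsilon>_def h0_def by auto
  have C: "grad_const L A \<delta> = 16 * (1 + 3/\<delta>1) * L\<^sup>2 + 8 / h0\<^sup>2"
    unfolding grad_const_def h0_def \<epsilon>_def \<delta>1_def Let_def ..
  have S0: "0 \<le> S" unfolding S_def by simp
  have "ne\<^sup>2 \<le> (1 + \<delta>) * nd\<^sup>2 + grad_const L A \<delta> * S * h\<^sup>2"
  proof (cases "h \<le> h0")
    case True
    have "A * h \<le> (A + 1) * (\<epsilon>\<^sup>2 / (A + 1))"
      using True pos unfolding h0_def by (intro mult_mono) auto
    then have "R \<le> \<epsilon>\<^sup>2" using R pos by simp
    moreover have "L * h \<le> (L + 1) * (\<epsilon> / (L + 1))"
      using True pos unfolding h0_def by (intro mult_mono) auto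
    ultimately have "ne\<^sup>2 \<le> (1 + \<delta>) * nd\<^sup>2 + 16 * (1 + 3/\<delta>1) * (L * h)\<^sup>2 * S"
      using normalized_diff_sq_le_small_mesh[OF a na r _ _ \<epsilon>_def \<delta>1] pos
      unfolding ne_def nd_def S_def by simp
    moreover have "16 * (1 + 3/\<delta>1) * (L * h)\<^sup>2 * S \<le> grad_const L A \<delta> * S * h\<^sup>2"
      unfolding C using S0 h0 by (simp add: algebra_simps power_mult_distrib)
    ultimately show ?thesis by linarith
  next
    case False
    have "ne\<^sup>2 \<le> 8 * S"
      using normalized_diff_sq_le_crude[OF a order_trans[OF r(1) R(1)] order_trans[OF r(2) R(1)]]
      unfolding ne_def S_def .
    also have "\<dots> \<le> (8 / h0\<^sup>2) * S * h\<^sup>2"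
    proof -
      have "h0\<^sup>2 \<le> h\<^sup>2" using False h0 by (intro power_mono) auto
      then have "8 * S * h0\<^sup>2 \<le> 8 * S * h\<^sup>2" using S0 by (intro mult_left_mono) auto
      then show ?thesis using h0 by (simp add: field_simps)
    qed
    also have "\<dots> \<le> grad_const L A \<delta> * S * h\<^sup>2"
      unfolding C using S0 \<delta>1 pos by (intro mult_right_mono) auto
    moreover have "0 \<le> (1 + \<delta>) * nd\<^sup>2" using pos by simp
    ultimately show ?thesis by linarith
  qed
  then have "ne\<^sup>2 / h\<^sup>2 \<le> (1 + \<delta>) * (nd\<^sup>2 / h\<^sup>2) + grad_const L A \<delta> * S"
    using pos by (simp add: field_simps)
  then show ?thesis unfolding norm_scaleR_inverse_sq[OF pos(1)] ne_def nd_def S_def .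
qed

lemma l2norm_sq_combination_le:
  assumes "\<And>i j l. i \<in> {1..N} \<Longrightarrow> j \<in> {1..N} \<Longrightarrow> l \<in> {1..N} \<Longrightarrow>
    \<alpha> * (norm (f i j l))\<^sup>2 + \<beta> * (norm (g i j l))\<^sup>2 \<le> (norm (u i j l))\<^sup>2"
  shows "\<alpha> * (l2norm N f)\<^sup>2 + \<beta> * (l2norm N g)\<^sup>2 \<le> (l2norm N u)\<^sup>2"
proof -
  have "\<alpha> * grid_sum N (\<lambda>i j l. (norm (f i j l))\<^sup>2) + \<beta> * grid_sum N (\<lambda>i j l. (norm (g i j l))\<^sup>2)
      \<le> grid_sum N (\<lambda>i j l. (norm (u i j l))\<^sup>2)"
    using grid_sum_mono[OF assms] by (simp only: grid_sum_add grid_sum_cmult)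
  then have "gh N ^ 3 * (\<alpha> * grid_sum N (\<lambda>i j l. (norm (f i j l))\<^sup>2)
      + \<beta> * grid_sum N (\<lambda>i j l. (norm (g i j l))\<^sup>2))
      \<le> gh N ^ 3 * grid_sum N (\<lambda>i j l. (norm (u i j l))\<^sup>2)"
    by (rule mult_left_mono) (simp add: gh_def)
  then show ?thesis unfolding l2norm_sq by (simp add: algebra_simps)
qed

text \<open>The lower-order terms involve \<open>d\<close> at forward neighbours; by the Neumann condition
  these shifted sums are at most twice the unshifted one.\<close>

lemma gradnorm_sq_le:
  fixes e d :: gridfun
  assumes N: "1 \<le> N" and Q: "0 \<le> Q"
    and px: "\<And>i j l. i \<in> {1..N} \<Longrightarrow> j \<in> {1..N} \<Longrightarrow> l \<in> {1..N} \<Longrightarrow> (norm (Dx N e i j l))\<^sup>2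
      \<le> (1 + \<delta>) * (norm (Dx N d i j l))\<^sup>2 + Q * ((norm (d i j l))\<^sup>2 + (norm (d (Suc i) j l))\<^sup>2)"
    and py: "\<And>i j l. i \<in> {1..N} \<Longrightarrow> j \<in> {1..N} \<Longrightarrow> l \<in> {1..N} \<Longrightarrow> (norm (Dy N e i j l))\<^sup>2
      \<le> (1 + \<delta>) * (norm (Dy N d i j l))\<^sup>2 + Q * ((norm (d i j l))\<^sup>2 + (norm (d i (Suc j) l))\<^sup>2)"
    and pz: "\<And>i j l. i \<in> {1..N} \<Longrightarrow> j \<in> {1..N} \<Longrightarrow> l \<in> {1..N} \<Longrightarrow> (norm (Dz N e i j l))\<^sup>2
      \<le> (1 + \<delta>) * (norm (Dz N d i j l))\<^sup>2 + Q * ((norm (d i j l))\<^sup>2 + (norm (d i j (Suc l)))\<^sup>2)"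
    and ghost_x: "\<And>j l. j \<in> {1..N} \<Longrightarrow> l \<in> {1..N} \<Longrightarrow> d (Suc N) j l = d N j l"
    and ghost_y: "\<And>i l. i \<in> {1..N} \<Longrightarrow> l \<in> {1..N} \<Longrightarrow> d i (Suc N) l = d i N l"
    and ghost_z: "\<And>i j. i \<in> {1..N} \<Longrightarrow> j \<in> {1..N} \<Longrightarrow> d i j (Suc N) = d i j N"
  shows "(gradnorm N e)\<^sup>2 \<le> (1 + \<delta>) * (gradnorm N d)\<^sup>2 + (9 * Q) * (l2norm N d)\<^sup>2"
proof -
  define r where "r i j l = (norm (d i j l))\<^sup>2" for i j l
  define G where "G f i j l = (norm (Dx N f i j l))\<^sup>2 + (norm (Dy N f i j l))\<^sup>2 + (norm (Dz N f i j l))\<^sup>2"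
    for f i j l
  have shift: "grid_sum N (\<lambda>i j l. r (Suc i) j l) \<le> 2 * grid_sum N r"
    "grid_sum N (\<lambda>i j l. r i (Suc j) l) \<le> 2 * grid_sum N r"
    "grid_sum N (\<lambda>i j l. r i j (Suc l)) \<le> 2 * grid_sum N r"
    by (rule grid_sum_shift_le[OF N]; simp add: r_def ghost_x ghost_y ghost_z)+
  have shifts: "grid_sum N (\<lambda>i j l. r (Suc i) j l) + grid_sum N (\<lambda>i j l. r i (Suc j) l)
      + grid_sum N (\<lambda>i j l. r i j (Suc l)) \<le> 6 * grid_sum N r"
    using shift by linarith
  have "grid_sum N (G e) \<le> grid_sum N (\<lambda>i j l. (1 + \<delta>) * G d i j l
      + Q * (3 * r i j l + r (Suc i) j l + r i (Suc j) l + r i j (Suc l)))"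
  proof (rule grid_sum_mono)
    fix i j l assume ijl: "i \<in> {1..N}" "j \<in> {1..N}" "l \<in> {1..N}"
    have "(1 + \<delta>) * G d i j l + Q * (3 * r i j l + r (Suc i) j l + r i (Suc j) l + r i j (Suc l))
      = ((1 + \<delta>) * (norm (Dx N d i j l))\<^sup>2 + Q * ((norm (d i j l))\<^sup>2 + (norm (d (Suc i) j l))\<^sup>2))
      + ((1 + \<delta>) * (norm (Dy N d i j l))\<^sup>2 + Q * ((norm (d i j l))\<^sup>2 + (norm (d i (Suc j) l))\<^sup>2))
      + ((1 + \<delta>) * (norm (Dz N d i j l))\<^sup>2 + Q * ((norm (d i j l))\<^sup>2 + (norm (d i j (Suc l)))\<^sup>2))"
      unfolding G_def r_def by (simp add: algebra_simps)
    then show "G e i j l \<le> (1 + \<delta>) * G d i j l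
        + Q * (3 * r i j l + r (Suc i) j l + r i (Suc j) l + r i j (Suc l))"
      using px[OF ijl] py[OF ijl] pz[OF ijl] unfolding G_def by linarith
  qed
  also have "\<dots> = (1 + \<delta>) * grid_sum N (G d) + Q * (3 * grid_sum N r + grid_sum N (\<lambda>i j l. r (Suc i) j l)
      + grid_sum N (\<lambda>i j l. r i (Suc j) l) + grid_sum N (\<lambda>i j l. r i j (Suc l)))"
    by (simp only: grid_sum_add grid_sum_cmult)
  also have "\<dots> \<le> (1 + \<delta>) * grid_sum N (G d) + (9 * Q) * grid_sum N r"
    using mult_left_mono[OF shifts Q] by (simp add: algebra_simps)
  finally have "gh N ^ 3 * grid_sum N (G e) \<le> gh N ^ 3 * ((1 + \<delta>) * grid_sum N (G d) + (9 * Q) * grid_sum N r)"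
    by (rule mult_left_mono) (simp add: gh_def)
  then show ?thesis unfolding gradnorm_sq l2norm_sq G_def r_def by (simp add: algebra_simps)
qed

section \<open>The error estimates\<close>

text \<open>With \<open>\<sigma> = k^(1/8)\<close>, the hypotheses bound the unscaled grid sums of \<open>|et|\<^sup>2\<close> by \<open>4 C\<^sub>2^3 \<sigma>^6\<close>,
  those of the squared differences of \<open>et\<close> by \<open>C\<^sub>2 \<sigma>^14\<close>, and \<open>1/N\<close> by \<open>\<sigma>^8 / C\<^sub>1\<close>.\<close>

definition data_const :: "real \<Rightarrow> real \<Rightarrow> real" where
  "data_const C1 C2 = 4 * C2^3 + C2 + 1/C1 + 1"

definition k_threshold :: "real \<Rightarrow> real \<Rightarrow> real" where
  "k_threshold C1 C2 = (min (1/2) (1 / (2 * sup_const (data_const C1 C2))))^8"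

lemma data_const_pos: "0 < C1 \<Longrightarrow> 0 < C2 \<Longrightarrow> 0 < data_const C1 C2"
  unfolding data_const_def by (simp add: add_pos_pos)

lemma k_threshold_pos:
  assumes "0 < C1" "0 < C2"
  shows "0 < k_threshold C1 C2"
  using sup_const_pos[OF data_const_pos[OF assms]] unfolding k_threshold_def by (simp add: min_def)

locale small_error =
  fixes Cs C1 C2 :: real and me :: "real^3 \<Rightarrow> real^3" and N :: nat and k :: real and mt :: gridfun
  assumes pos: "0 < Cs" "0 < C1" "0 < C2"
    and lip: "Cs-lipschitz_on unit_cube me" and unit: "\<forall>x\<in>unit_cube. norm (me x) = 1"
    and N: "1 \<le> N" and X: "in_X N mt"
    and k: "0 < k" "C1 * gh N \<le> k" "k \<le> C2 * gh N" "k \<le> k_threshold C1 C2"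
    and l2: "l2norm N (\<lambda>i j l. Ph N me i j l - mt i j l) \<le> 2 * k powr (15/8)"
    and grad: "gradnorm N (\<lambda>i j l. Ph N me i j l - mt i j l) \<le> 1/2 * k powr (11/8)"
begin

definition err :: gridfun where "err = (\<lambda>i j l. Ph N me i j l - mt i j l)"

definition \<sigma> :: real where "\<sigma> = k powr (1/8)"

abbreviation "B \<equiv> data_const C1 C2"

lemma \<sigma>_power: "\<sigma> ^ n = k powr (real n / 8)"
proof -
  have "\<sigma> ^ n = \<sigma> powr real n" using k(1) unfolding \<sigma>_def by (simp add: powr_realpow)
  also have "\<dots> = k powr (1/8 * real n)" unfolding \<sigma>_def by (rule powr_powr)
  finally show ?thesis by simp
qed

lemma \<sigma>_power_8: "\<sigma>^8 = k"
  using \<sigma>_power[of 8] k(1) by simp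

lemma \<sigma>_pos: "0 < \<sigma>"
  using k(1) unfolding \<sigma>_def by simp

lemma \<sigma>_le: "\<sigma> \<le> 1/2" "\<sigma> \<le> 1 / (2 * sup_const B)"
proof -
  define s0 where "s0 = min (1/2) (1 / (2 * sup_const B))"
  have "0 < s0" unfolding s0_def using sup_const_pos[OF data_const_pos[OF pos(2,3)]] by simp
  have "\<sigma> \<le> (s0 ^ 8) powr (1/8)"
    using k unfolding \<sigma>_def k_threshold_def s0_def by (intro powr_mono2) auto
  also have "(s0 ^ 8) powr (1/8) = (s0 powr real 8) powr (1/8)" using \<open>0 < s0\<close> by (simp add: powr_realpow)
  also have "\<dots> = s0" using \<open>0 < s0\<close> by (simp only: powr_powr) simp
  finally show "\<sigma> \<le> 1/2" "\<sigma> \<le> 1 / (2 * sup_const B)" unfolding s0_def by simp_all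
qed

lemma gh_pos: "0 < gh N"
  using N unfolding gh_def by simp

lemma N_gh: "real N * gh N = 1"
  using N unfolding gh_def by simp

lemma N_mult_\<sigma>_power_8_le: "real N * \<sigma>^8 \<le> C2"
proof -
  have "real N * \<sigma>^8 \<le> real N * (C2 * gh N)" unfolding \<sigma>_power_8 using k by (intro mult_left_mono) auto
  also have "\<dots> = C2" using N_gh by (simp add: algebra_simps)
  finally show ?thesis .
qed

lemma mesh_le: "1 / real N \<le> B * \<sigma>^8"
proof -
  have "gh N \<le> (1 / C1) * k" using k(2) pos(2) by (simp add: field_simps)
  also have "\<dots> \<le> B * k" using k(1) pos unfolding data_const_def by (intro mult_right_mono) auto
  finally show ?thesis unfolding \<sigma>_power_8 gh_def .
qed

lemma l2norm_err_le: "l2norm N err \<le> 2 * \<sigma>^15"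
  using l2 unfolding err_def \<sigma>_power by simp

lemma gradnorm_err_le: "gradnorm N err \<le> \<sigma>^11 / 2"
  using grad unfolding err_def \<sigma>_power by simp

lemma err_mass_le: "grid_sum N (\<lambda>i j l. (norm (err i j l))\<^sup>2) \<le> B * \<sigma>^6"
proof -
  define U where "U = grid_sum N (\<lambda>i j l. (norm (err i j l))\<^sup>2)"
  have "gh N ^ 3 * U = (l2norm N err)\<^sup>2" unfolding U_def l2norm_sq ..
  also have "\<dots> \<le> (2 * \<sigma>^15)\<^sup>2"
    by (rule power_mono[OF l2norm_err_le]) (simp add: l2norm_def gh_def sum_nonneg)
  also have "\<dots> = 4 * \<sigma>^30" by (simp add: power_mult_distrib flip: power_mult)
  finally have hU: "gh N ^ 3 * U \<le> 4 * \<sigma>^30" .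
  have "U = (gh N ^ 3 * U) * real N ^ 3" using N_gh by (simp add: power_mult_distrib[symmetric] algebra_simps)
  also have "\<dots> \<le> (4 * \<sigma>^30) * real N ^ 3" using hU by (rule mult_right_mono) simp
  also have "\<dots> = 4 * \<sigma>^6 * (real N * \<sigma>^8)^3" by (simp add: power_mult_distrib flip: power_mult power_add)
  also have "\<dots> \<le> 4 * \<sigma>^6 * C2^3"
    using N_mult_\<sigma>_power_8_le \<sigma>_pos by (intro mult_left_mono power_mono) auto
  also have "\<dots> = (4 * C2^3) * \<sigma>^6" by simp
  also have "\<dots> \<le> B * \<sigma>^6"
    using \<sigma>_pos pos unfolding data_const_def by (intro mult_right_mono) auto
  finally show ?thesis unfolding U_def .
qed

lemma err_variation_le:
  "grid_sum N (\<lambda>i j l. (norm (err (Suc i) j l - err i j l))\<^sup>2) \<le> B * \<sigma>^14"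
  "grid_sum N (\<lambda>i j l. (norm (err i (Suc j) l - err i j l))\<^sup>2) \<le> B * \<sigma>^14"
  "grid_sum N (\<lambda>i j l. (norm (err i j (Suc l) - err i j l))\<^sup>2) \<le> B * \<sigma>^14"
proof -
  define Wx where "Wx = grid_sum N (\<lambda>i j l. (norm (err (Suc i) j l - err i j l))\<^sup>2)"
  define Wy where "Wy = grid_sum N (\<lambda>i j l. (norm (err i (Suc j) l - err i j l))\<^sup>2)"
  define Wz where "Wz = grid_sum N (\<lambda>i j l. (norm (err i j (Suc l) - err i j l))\<^sup>2)"
  have W0: "0 \<le> Wx" "0 \<le> Wy" "0 \<le> Wz" unfolding Wx_def Wy_def Wz_def by (auto intro: grid_sum_nonneg)
  have "grid_sum N (\<lambda>i j l. (norm (Dx N err i j l))\<^sup>2 + (norm (Dy N err i j l))\<^sup>2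
      + (norm (Dz N err i j l))\<^sup>2) = (Wx + Wy + Wz) / (gh N)\<^sup>2"
    unfolding Dx_def Dy_def Dz_def norm_scaleR_inverse_sq[OF gh_pos]
    by (simp only: grid_sum_add grid_sum_divide Wx_def Wy_def Wz_def add_divide_distrib Suc_eq_plus1)
  then have "gh N * (Wx + Wy + Wz) = (gradnorm N err)\<^sup>2"
    unfolding gradnorm_sq using gh_pos by (simp add: power2_eq_square power3_eq_cube)
  also have "\<dots> \<le> (\<sigma>^11 / 2)\<^sup>2"
    by (rule power_mono[OF gradnorm_err_le]) (simp add: gradnorm_def gh_def sum_nonneg)
  also have "\<dots> = \<sigma>^22 / 4" by (simp add: power_divide flip: power_mult)
  finally have hW: "gh N * (Wx + Wy + Wz) \<le> \<sigma>^22 / 4" .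
  have "Wx + Wy + Wz = (gh N * (Wx + Wy + Wz)) * real N" using N_gh by (simp add: algebra_simps)
  also have "\<dots> \<le> (\<sigma>^22 / 4) * real N" using hW by (rule mult_right_mono) simp
  also have "\<dots> = \<sigma>^14 * (real N * \<sigma>^8) / 4" by (simp flip: power_add)
  also have "\<dots> \<le> \<sigma>^14 * C2 / 4"
    using N_mult_\<sigma>_power_8_le \<sigma>_pos by (intro divide_right_mono mult_left_mono) auto
  also have "\<dots> \<le> C2 * \<sigma>^14" using \<sigma>_pos pos by simp
  also have "\<dots> \<le> B * \<sigma>^14"
    using \<sigma>_pos pos unfolding data_const_def by (intro mult_right_mono) auto
  finally show "Wx \<le> B * \<sigma>^14" "Wy \<le> B * \<sigma>^14" "Wz \<le> B * \<sigma>^14" using W0 by linarith+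
qed

lemma err_clampi:
  assumes "i \<le> N+1" "j \<le> N+1" "l \<le> N+1"
  shows "err i j l = err (clampi N i) (clampi N j) (clampi N l)"
  unfolding err_def by (simp only: in_X_clampi[OF X N assms] Ph_clampi[OF N, of me i j l])

lemma err_ghost:
  "j \<in> {1..N} \<Longrightarrow> l \<in> {1..N} \<Longrightarrow> err (Suc N) j l = err N j l"
  "i \<in> {1..N} \<Longrightarrow> l \<in> {1..N} \<Longrightarrow> err i (Suc N) l = err i N l"
  "i \<in> {1..N} \<Longrightarrow> j \<in> {1..N} \<Longrightarrow> err i j (Suc N) = err i j N"
proof -
  have "clampi N (Suc N) = clampi N N" using N by (simp add: clampi_def)
  then have Ph: "Ph N me (Suc N) j l = Ph N me N j l" "Ph N me i (Suc N) l = Ph N me i N l"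
    "Ph N me i j (Suc N) = Ph N me i j N" for i j l
    unfolding Ph_def by simp_all
  have mt: "j \<le> N+1 \<Longrightarrow> l \<le> N+1 \<Longrightarrow> mt (Suc N) j l = mt N j l"
    "i \<le> N+1 \<Longrightarrow> l \<le> N+1 \<Longrightarrow> mt i (Suc N) l = mt i N l"
    "i \<le> N+1 \<Longrightarrow> j \<le> N+1 \<Longrightarrow> mt i j (Suc N) = mt i j N" for i j l
    using X unfolding in_X_def by simp_all
  show "j \<in> {1..N} \<Longrightarrow> l \<in> {1..N} \<Longrightarrow> err (Suc N) j l = err N j l"
    "i \<in> {1..N} \<Longrightarrow> l \<in> {1..N} \<Longrightarrow> err i (Suc N) l = err i N l"
    "i \<in> {1..N} \<Longrightarrow> j \<in> {1..N} \<Longrightarrow> err i j (Suc N) = err i j N"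
    unfolding err_def by (simp_all add: Ph mt)
qed

lemma err_sup_le:
  assumes "i \<le> N+1" "j \<le> N+1" "l \<le> N+1"
  shows "(norm (err i j l))\<^sup>2 \<le> sup_const B * \<sigma>^13"
proof -
  have "\<sigma> \<le> 1" using \<sigma>_le(1) by simp
  moreover have "0 \<le> B" using data_const_pos[OF pos(2,3)] by simp
  ultimately have "(norm (err (clampi N i) (clampi N j) (clampi N l)))\<^sup>2 \<le> sup_const B * \<sigma>^13"
    by (rule grid_sup_bound[OF \<sigma>_pos _ _ err_mass_le err_variation_le mesh_le
          clampi_mem[OF N] clampi_mem[OF N] clampi_mem[OF N]])
  then show ?thesis by (simp only: err_clampi[OF assms])
qed

lemma sup_bound_le:
  "sup_const B * \<sigma>^13 \<le> \<sigma>^12 / 2" "sup_const B * \<sigma>^13 \<le> (sup_const B * C2) * gh N"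
proof -
  have B3: "0 < sup_const B" using sup_const_pos[OF data_const_pos[OF pos(2,3)]] .
  have "sup_const B * \<sigma> \<le> 1/2" using \<sigma>_le(2) B3 by (simp add: field_simps)
  then have "(sup_const B * \<sigma>) * \<sigma>^12 \<le> (1/2) * \<sigma>^12"
    using \<sigma>_pos by (intro mult_right_mono) auto
  moreover have "\<sigma>^13 = \<sigma> * \<sigma>^12" using power_add[of \<sigma> 1 12] by simp
  ultimately show "sup_const B * \<sigma>^13 \<le> \<sigma>^12 / 2" by (simp add: mult.assoc)
  have "\<sigma>^13 \<le> \<sigma>^8" using \<sigma>_pos \<sigma>_le(1) by (intro power_decreasing) auto
  then have "sup_const B * \<sigma>^13 \<le> sup_const B * (C2 * gh N)"
    using k(3) B3 unfolding \<sigma>_power_8 by (simp add: mult_left_mono)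
  then show "sup_const B * \<sigma>^13 \<le> (sup_const B * C2) * gh N" by (simp add: algebra_simps)
qed

lemma half_\<sigma>12_le: "\<sigma>^12 / 2 \<le> 1/4"
proof -
  have "\<sigma>^12 \<le> \<sigma>^1" using \<sigma>_pos \<sigma>_le(1) by (intro power_decreasing) auto
  then show ?thesis using \<sigma>_le(1) by simp
qed

lemma err_sq_le_half_\<sigma>12: "i \<le> N+1 \<Longrightarrow> j \<le> N+1 \<Longrightarrow> l \<le> N+1 \<Longrightarrow> (norm (err i j l))\<^sup>2 \<le> \<sigma>^12 / 2"
  using err_sup_le sup_bound_le(1) by fastforce

lemma mt_nonzero: "i \<le> N+1 \<Longrightarrow> j \<le> N+1 \<Longrightarrow> l \<le> N+1 \<Longrightarrow> mt i j l \<noteq> 0"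
  using err_sq_le_half_\<sigma>12 half_\<sigma>12_le Ph_norm_eq_1[OF N unit, of i j l]
  unfolding err_def by fastforce

lemma l2_split:
  "(1 - k powr (5/4)) * (l2norm N (\<lambda>i j l. Ph N me i j l - gnormalize mt i j l))\<^sup>2
   + (1 - k powr (1/4)) * (l2norm N (\<lambda>i j l. err i j l - (Ph N me i j l - gnormalize mt i j l)))\<^sup>2
   \<le> (l2norm N err)\<^sup>2"
proof (rule l2norm_sq_combination_le)
  fix i j l :: nat assume "i \<in> {1..N}" "j \<in> {1..N}" "l \<in> {1..N}"
  then have small: "(norm (Ph N me i j l - mt i j l))\<^sup>2 \<le> \<sigma>^12 / 2"
    using err_sq_le_half_\<sigma>12 unfolding err_def by simp
  have "k powr (5/4) = \<sigma>^10" "k powr (1/4) = \<sigma>^2" unfolding \<sigma>_power by simp_all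
  moreover have "(1 - \<sigma>^10) * (norm (Ph N me i j l - gnormalize mt i j l))\<^sup>2
      + (1 - \<sigma>^2) * (norm ((Ph N me i j l - mt i j l) - (Ph N me i j l - gnormalize mt i j l)))\<^sup>2
      \<le> (norm (Ph N me i j l - mt i j l))\<^sup>2"
    unfolding gnormalize_def
    using \<sigma>_pos half_\<sigma>12_le
    by (intro sq_dist_ge_normalized_split[OF Ph_norm_eq_1[OF N unit] small])
      (simp_all flip: power_add)
  ultimately show "(1 - k powr (5/4)) * (norm (Ph N me i j l - gnormalize mt i j l))\<^sup>2
      + (1 - k powr (1/4)) * (norm (err i j l - (Ph N me i j l - gnormalize mt i j l)))\<^sup>2
      \<le> (norm (err i j l))\<^sup>2"
    unfolding err_def by simp
qed

lemma grad_split: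
  assumes "0 < \<delta>"
  shows "(gradnorm N (\<lambda>i j l. Ph N me i j l - gnormalize mt i j l))\<^sup>2
    \<le> (1 + \<delta>) * (gradnorm N err)\<^sup>2 + (9 * grad_const Cs (sup_const B * C2) \<delta>) * (l2norm N err)\<^sup>2"
proof (rule gradnorm_sq_le[OF N grad_const_nonneg[OF assms] _ _ _ err_ghost])
  have B3: "0 \<le> sup_const B * C2" using sup_const_pos[OF data_const_pos[OF pos(2,3)]] pos by simp
  have err_small: "(norm (err i j l))\<^sup>2 \<le> sup_const B * \<sigma>^13" if "i \<le> N+1" "j \<le> N+1" "l \<le> N+1" for i j l
    using err_sup_le[OF that] .
  have R: "sup_const B * \<sigma>^13 \<le> 1/4" using sup_bound_le(1) half_\<sigma>12_le by linarith
  have pt: "(norm (((Ph N me i' j' l' - mt i' j' l' /\<^sub>R norm (mt i' j' l'))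
        - (Ph N me i j l - mt i j l /\<^sub>R norm (mt i j l))) /\<^sub>R gh N))\<^sup>2
      \<le> (1 + \<delta>) * (norm (((Ph N me i' j' l' - mt i' j' l') - (Ph N me i j l - mt i j l)) /\<^sub>R gh N))\<^sup>2
        + grad_const Cs (sup_const B * C2) \<delta>
          * ((norm (Ph N me i j l - mt i j l))\<^sup>2 + (norm (Ph N me i' j' l' - mt i' j' l'))\<^sup>2)"
    if "i \<le> N+1" "j \<le> N+1" "l \<le> N+1" "i' \<le> N+1" "j' \<le> N+1" "l' \<le> N+1"
      and step: "norm (Ph N me i' j' l' - Ph N me i j l) \<le> Cs * gh N" for i j l i' j' l'
    using err_small[OF that(1-3)] err_small[OF that(4-6)] unfolding err_def
    by (intro normalized_diff_quotient_le[OF Ph_norm_eq_1[OF N unit] Ph_norm_eq_1[OF N unit] step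
          _ _ R sup_bound_le(2) gh_pos _ B3 assms]) (use pos in simp_all)
  fix i j l assume "i \<in> {1..N}" "j \<in> {1..N}" "l \<in> {1..N}"
  then have ijl: "i \<le> N+1" "j \<le> N+1" "l \<le> N+1" "Suc i \<le> N+1" "Suc j \<le> N+1" "Suc l \<le> N+1" by auto
  note lipP = Ph_Suc_dist_le[OF N lip]
  show "(norm (Dx N (\<lambda>i j l. Ph N me i j l - gnormalize mt i j l) i j l))\<^sup>2
      \<le> (1 + \<delta>) * (norm (Dx N err i j l))\<^sup>2
        + grad_const Cs (sup_const B * C2) \<delta> * ((norm (err i j l))\<^sup>2 + (norm (err (Suc i) j l))\<^sup>2)"
    using pt[OF ijl(1-3) ijl(4) ijl(2,3) lipP(1)] unfolding Dx_def gnormalize_def err_def by simp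
  show "(norm (Dy N (\<lambda>i j l. Ph N me i j l - gnormalize mt i j l) i j l))\<^sup>2
      \<le> (1 + \<delta>) * (norm (Dy N err i j l))\<^sup>2
        + grad_const Cs (sup_const B * C2) \<delta> * ((norm (err i j l))\<^sup>2 + (norm (err i (Suc j) l))\<^sup>2)"
    using pt[OF ijl(1-3) ijl(1) ijl(5) ijl(3) lipP(2)] unfolding Dy_def gnormalize_def err_def by simp
  show "(norm (Dz N (\<lambda>i j l. Ph N me i j l - gnormalize mt i j l) i j l))\<^sup>2
      \<le> (1 + \<delta>) * (norm (Dz N err i j l))\<^sup>2
        + grad_const Cs (sup_const B * C2) \<delta> * ((norm (err i j l))\<^sup>2 + (norm (err i j (Suc l)))\<^sup>2)"
    using pt[OF ijl(1-3) ijl(1,2) ijl(6) lipP(3)] unfolding Dz_def gnormalize_def err_def by simp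
qed

lemma error_estimates:
  assumes "0 < \<delta>"
  shows "let et = (\<lambda>i j l. Ph N me i j l - mt i j l);
          e  = (\<lambda>i j l. Ph N me i j l - gnormalize mt i j l)
      in (\<forall>i\<le>N+1. \<forall>j\<le>N+1. \<forall>l\<le>N+1. mt i j l \<noteq> 0) \<and>
         (l2norm N et)\<^sup>2 \<ge> (1 - k powr (5/4)) * (l2norm N e)\<^sup>2
                           + (1 - k powr (1/4)) * (l2norm N (\<lambda>i j l. et i j l - e i j l))\<^sup>2 \<and>
         (gradnorm N e)\<^sup>2 \<le> (1 + \<delta>) * (gradnorm N et)\<^sup>2
                           + (9 * grad_const Cs (sup_const B * C2) \<delta>) * (l2norm N et)\<^sup>2"
  using mt_nonzero l2_split grad_split[OF assms] unfolding Let_def err_def by blast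

end

theorem mainTheorem3:
  fixes Cs C1 C2 :: real
  assumes "Cs > 0" and "C1 > 0" and "C2 > 0"
  shows "\<exists>k0>0. \<forall>\<delta>>0. \<exists>C\<delta>. \<forall>(me :: real^3 \<Rightarrow> real^3) (N :: nat) (k :: real) (mt :: gridfun).
     (continuous_on unit_cube me \<and> Cs-lipschitz_on unit_cube me \<and>
      (\<forall>x\<in>unit_cube. norm (me x) = 1) \<and>
      N \<ge> 1 \<and> in_X N mt \<and>
      k > 0 \<and> C1 * gh N \<le> k \<and> k \<le> C2 * gh N \<and> k \<le> k0 \<and> gh N \<le> k0 \<and>
      l2norm N (\<lambda>i j l. Ph N me i j l - mt i j l) \<le> 2 * k powr (15/8) \<and>
      gradnorm N (\<lambda>i j l. Ph N me i j l - mt i j l) \<le> 1/2 * k powr (11/8))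
     \<longrightarrow>
     (let et = (\<lambda>i j l. Ph N me i j l - mt i j l);
          e  = (\<lambda>i j l. Ph N me i j l - gnormalize mt i j l)
      in (\<forall>i\<le>N+1. \<forall>j\<le>N+1. \<forall>l\<le>N+1. mt i j l \<noteq> 0) \<and>
         (l2norm N et)\<^sup>2 \<ge> (1 - k powr (5/4)) * (l2norm N e)\<^sup>2
                           + (1 - k powr (1/4)) * (l2norm N (\<lambda>i j l. et i j l - e i j l))\<^sup>2 \<and>
         (gradnorm N e)\<^sup>2 \<le> (1 + \<delta>) * (gradnorm N et)\<^sup>2 + C\<delta> * (l2norm N et)\<^sup>2)"
proof (rule exI[of _ "k_threshold C1 C2"], intro conjI allI impI, goal_cases)
  case 1
  show ?case using assms(2,3) by (rule k_threshold_pos)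
next
  case (2 \<delta>)
  show ?case
  proof (rule exI[of _ "9 * grad_const Cs (sup_const (data_const C1 C2) * C2) \<delta>"], intro allI impI, goal_cases)
    case (1 me N k mt)
    then interpret small_error Cs C1 C2 me N k mt
      using assms by unfold_locales auto
    show ?case using error_estimates[OF \<open>0 < \<delta>\<close>] .
  qed
qed

end
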